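(* Let $n\ge2$, $0<\beta<n$ and $1<\tau<\infty$, and let $1\le\eta\le q\le p<\infty$ satisfy $$\frac1\eta<\beta+\frac1q,\qquad\frac{n-1}p=\frac{n-1}\tau+\frac1\eta-\frac1q-\beta.$$ Then the operator $G_\beta F(y)=\int_{\mathbb{R}^n_+}\frac{F(z)}{|y-z|^{n-\beta}}dz$ is bounded from $L^\tau L^\eta(\mathbb{R}^n_+)$ into $L^pL^q(\mathbb{R}^n_+)$.
   Context: For $p,q\in[1,\infty]$, $L^pL^q(\mathbb{R}^n_+)$ is the mixed-norm space of measurable $F$ on $\mathbb{R}^n_+$ with $\|F\|_{L^pL^q(\mathbb{R}^n_+)}=\big\|\,x'\mapsto\|F(x',\cdot)\|_{L^q(\mathbb{R}_+,dx_n)}\big\|_{L^p(\mathbb{R}^{n-1},dx')}<\infty$. *)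

theory Defs
  imports "HOL-Analysis.Analysis"
begin

text \<open>Points of the upper half space R^n_+ are pairs (x', x_n) with x' :: real^'m
  (so n = CARD('m) + 1 \<ge> 2) and x_n > 0. The distance on the product type is the
  Euclidean one: dist (a,b) (c,d) = sqrt (dist a c ^ 2 + dist b d ^ 2).\<close>

definition upper_half :: "('m::finite) itself \<Rightarrow> ((real^'m) \<times> real) set" where
  "upper_half _ = {z. snd z > 0}"

definition epow :: "ennreal \<Rightarrow> real \<Rightarrow> ennreal" where
  "epow x r = (if x = \<infinity> then \<infinity> else ennreal (enn2real x powr r))"

definition mixnorm :: "real \<Rightarrow> real \<Rightarrow> ((real^'m::finite) \<times> real \<Rightarrow> real) \<Rightarrow> ennreal" where
  "mixnorm p q F =
     epow (\<integral>\<^sup>+ x'. epow (\<integral>\<^sup>+ t. indicator {0<..} t * ennreal (\<bar>F (x', t)\<bar> powr q) \<partial>lborel) (p / q)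
             \<partial>lborel) (1 / p)"

definition G_op :: "real \<Rightarrow> ((real^'m::finite) \<times> real \<Rightarrow> real) \<Rightarrow> (real^'m) \<times> real \<Rightarrow> real" where
  "G_op \<beta> F y = (LINT z : upper_half TYPE('m) | lborel.
      F z / dist y z powr (real (CARD('m) + 1) - \<beta>))"

end

theory Submission
  imports Defs
begin

text \<open>
  Write points of the half space as \<open>(x', t)\<close> and put \<open>\<gamma> = \<beta> + 1/q - 1/\<eta>\<close>, \<open>1/r = 1 + 1/q - 1/\<eta>\<close>.
  For fixed \<open>x'\<close>, Minkowski's and Young's inequality in the vertical variable bound the
  \<open>L\<^sup>q\<close> norm of \<open>t \<mapsto> G\<^sub>\<beta> F (x', t)\<close> by \<open>\<integral> \<phi>(z') k(x' - z') dz'\<close>, where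
  \<open>\<phi>(z') = \<parallel>F(z', \<cdot>)\<parallel>\<^sub>\<eta>\<close> and \<open>k(a)\<close> is the \<open>L\<^sup>r\<close> norm of the kernel along a vertical line at
  horizontal distance \<open>|a|\<close>; by scaling \<open>k(a) = c |a|\<^sup>-\<^sup>l\<close> with \<open>l = n - 1 - \<gamma>\<close>.  The remaining
  Riesz potential of \<open>\<phi>\<close> on \<open>\<real>\<^sup>n\<^sup>-\<^sup>1\<close> is bounded from \<open>L\<^sup>\<tau>\<close> to \<open>L\<^sup>p\<close> by the
  Hardy--Littlewood--Sobolev inequality, whose exponent condition is exactly the scaling
  relation of the hypotheses.  Hardy--Littlewood--Sobolev is proved in Lieb's way: the layer
  cake representation reduces the bilinear form \<open>\<integral>\<integral> f(x) g(y) |x - y|\<^sup>-\<^sup>l\<close> to estimates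
  for the measures of superlevel sets, and the linear inequality follows by duality.
\<close>

lemma measurable_epow[measurable]:
  assumes [measurable]: "f \<in> borel_measurable M"
  shows "(\<lambda>x. epow (f x) r) \<in> borel_measurable M"
  unfolding epow_def by measurable

lemma epow_top[simp]: "epow top r = top"
  by (simp add: epow_def)

lemma epow_0[simp]: "epow 0 r = 0"
  by (simp add: epow_def)

lemma epow_1[simp]: "epow x 1 = x"
  by (cases x) (auto simp: epow_def)

lemma epow_ennreal: "0 \<le> x \<Longrightarrow> epow (ennreal x) r = ennreal (x powr r)"
  by (simp add: epow_def)

lemma epow_eq_0_iff: "epow x r = 0 \<longleftrightarrow> x = 0"
  by (cases x) (auto simp: epow_ennreal)

lemma epow_eq_top_iff: "epow x r = top \<longleftrightarrow> x = top"
  by (cases x) (auto simp: epow_ennreal)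

lemma epow_less_top: "x < top \<Longrightarrow> epow x r < top"
  by (cases x) (auto simp: epow_ennreal)

lemma epow_mono: "0 \<le> r \<Longrightarrow> x \<le> y \<Longrightarrow> epow x r \<le> epow y r"
  by (cases x; cases y) (auto simp: epow_ennreal top_unique intro!: powr_mono2)

lemma epow_mult: "epow (x * y) r = epow x r * epow y r"
  by (cases x; cases y)
     (auto simp: epow_ennreal ennreal_mult_top ennreal_top_mult ennreal_mult[symmetric] powr_mult)

lemma epow_epow: "epow (epow x a) b = epow x (a * b)"
  by (cases x) (auto simp: epow_ennreal powr_powr)

lemma epow_add: "epow x a * epow x b = epow x (a + b)"
  by (cases x) (auto simp: epow_ennreal ennreal_mult[symmetric] powr_add ennreal_top_mult)

lemma Youngs_inequality_3:
  fixes u v w a b c :: real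
  assumes "0 \<le> u" "0 \<le> v" "0 \<le> w" "0 \<le> a" "0 \<le> b" "0 \<le> c" "a + b + c = 1"
  shows "u powr a * v powr b * w powr c \<le> a * u + b * v + c * w"
proof (cases "u = 0 \<or> v = 0 \<or> w = 0 \<or> b + c = 0")
  case True
  then consider "u = 0 \<or> v = 0 \<or> w = 0" | "b = 0" "c = 0" "a = 1"
    using assms by fastforce
  then show ?thesis using assms by cases auto
next
  case False
  then have pos: "0 < u" "0 < v" "0 < w" "0 < b + c" using assms by auto
  define m where "m = v powr (b/(b+c)) * w powr (c/(b+c))"
  have "u powr a * v powr b * w powr c = u powr a * m powr (b + c)"
    using pos by (simp add: m_def powr_mult powr_powr mult.assoc)
  also have "\<dots> \<le> a * u + (b + c) * m"
    using Youngs_inequality_0[of a "b + c" u m] assms pos by (auto simp: m_def)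
  also have "m \<le> b/(b+c) * v + c/(b+c) * w"
    unfolding m_def using Youngs_inequality_0[of "b/(b+c)" "c/(b+c)" v w] assms pos
    by (auto simp: add_divide_distrib[symmetric])
  then have "(b + c) * m \<le> b * v + c * w"
    using pos by (simp add: add_divide_distrib[symmetric] pos_le_divide_eq mult.commute)
  finally show ?thesis by simp
qed

lemma nn_integral_Holder3_finite:
  fixes X Y Z :: "'a \<Rightarrow> real"
  assumes [measurable]: "X \<in> borel_measurable M" "Y \<in> borel_measurable M" "Z \<in> borel_measurable M"
    and nn: "\<And>x. 0 \<le> X x" "\<And>x. 0 \<le> Y x" "\<And>x. 0 \<le> Z x"
    and ex: "0 \<le> a" "0 \<le> b" "0 \<le> c" "a + b + c = 1"
    and A: "(\<integral>\<^sup>+x. X x \<partial>M) = ennreal A" "0 < A"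
    and B: "(\<integral>\<^sup>+x. Y x \<partial>M) = ennreal B" "0 < B"
    and C: "(\<integral>\<^sup>+x. Z x \<partial>M) = ennreal C" "0 < C"
  shows "(\<integral>\<^sup>+x. ennreal (X x powr a * Y x powr b * Z x powr c) \<partial>M)
     \<le> ennreal (A powr a * B powr b * C powr c)"
proof -
  define K where "K = A powr a * B powr b * C powr c"
  have "X x powr a * Y x powr b * Z x powr c
      = K * ((X x / A) powr a * (Y x / B) powr b * (Z x / C) powr c)" for x
    using A B C nn[of x] by (simp add: K_def powr_divide field_simps)
  also have "\<dots> x \<le> K * (a / A * X x + b / B * Y x + c / C * Z x)" for x
    using A B C nn[of x] ex
    by (intro mult_left_mono order.trans[OF Youngs_inequality_3]) (auto simp: K_def)
  finally have "(\<integral>\<^sup>+x. ennreal (X x powr a * Y x powr b * Z x powr c) \<partial>M)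
      \<le> (\<integral>\<^sup>+x. ennreal K * (ennreal (a / A) * X x + ennreal (b / B) * Y x + ennreal (c / C) * Z x) \<partial>M)"
    using A B C nn ex
    by (intro nn_integral_mono)
       (simp add: K_def ennreal_mult[symmetric] ennreal_plus[symmetric] del: ennreal_plus)
  also have "\<dots> = ennreal K * (ennreal (a / A) * A + ennreal (b / B) * B + ennreal (c / C) * C)"
    using A B C by (simp add: nn_integral_cmult nn_integral_add)
  also have "\<dots> = ennreal K"
    using A B C ex
    by (simp add: K_def ennreal_mult[symmetric] ennreal_plus[symmetric] del: ennreal_plus)
  finally show ?thesis by (simp add: K_def)
qed

lemma nn_integral_Holder3:
  fixes X Y Z :: "'a \<Rightarrow> real"
  assumes [measurable]: "X \<in> borel_measurable M" "Y \<in> borel_measurable M" "Z \<in> borel_measurable M"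
    and nn: "\<And>x. 0 \<le> X x" "\<And>x. 0 \<le> Y x" "\<And>x. 0 \<le> Z x"
    and ex: "0 \<le> a" "0 \<le> b" "0 \<le> c" "a + b + c = 1"
  shows "(\<integral>\<^sup>+x. ennreal (X x powr a * Y x powr b * Z x powr c) \<partial>M)
     \<le> epow (\<integral>\<^sup>+x. X x \<partial>M) a * epow (\<integral>\<^sup>+x. Y x \<partial>M) b * epow (\<integral>\<^sup>+x. Z x \<partial>M) c"
    (is "?L \<le> epow ?A a * epow ?B b * epow ?C c")
proof (cases "?A = 0 \<or> ?B = 0 \<or> ?C = 0")
  case True
  then have "AE x in M. X x = 0 \<or> Y x = 0 \<or> Z x = 0"
    using nn by (auto simp: nn_integral_0_iff_AE elim!: eventually_mono)
  then have "?L = 0"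
    by (subst nn_integral_0_iff_AE) (auto elim!: eventually_mono)
  then show ?thesis by simp
next
  case nonzero: False
  show ?thesis
  proof (cases "?A = top \<or> ?B = top \<or> ?C = top")
    case True
    with nonzero show ?thesis
      by (auto simp: epow_eq_top_iff epow_eq_0_iff ennreal_mult_eq_top_iff)
  next
    case False
    with nonzero obtain A B C where
      "?A = ennreal A" "0 < A" "?B = ennreal B" "0 < B" "?C = ennreal C" "0 < C"
      by (cases ?A; cases ?B; cases ?C) auto
    with nn_integral_Holder3_finite[OF assms] show ?thesis
      by (simp add: epow_ennreal ennreal_mult)
  qed
qed

lemma nn_integral_powr_Icc0:
  assumes "-1 < e" "0 \<le> c"
  shows "(\<integral>\<^sup>+x. ennreal (x powr e) * indicator {0..c} x \<partial>lborel) = ennreal (c powr (e + 1) / (e + 1))"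
  using has_integral_powr_from_0[of e c] assms by (intro nn_integral_has_integral_lebesgue') auto

lemma nn_integral_powr_atLeast:
  assumes "e < -1" "0 < a"
  shows "(\<integral>\<^sup>+x. ennreal (x powr e) * indicator {a..} x \<partial>lborel) = ennreal (a powr (e + 1) / (- e - 1))"
proof -
  have "-(a powr (e + 1)) / (e + 1) = a powr (e + 1) / (- e - 1)"
    by (simp add: divide_minus_right[symmetric])
  then show ?thesis
    using has_integral_powr_to_inf[of e a] assms by (intro nn_integral_has_integral_lebesgue') auto
qed

lemma lborel_nn_integral_swap:
  fixes h :: "'a::euclidean_space \<Rightarrow> 'b::euclidean_space \<Rightarrow> ennreal"
  assumes "(\<lambda>(x, y). h x y) \<in> borel_measurable (lborel \<Otimes>\<^sub>M lborel)"
  shows "(\<integral>\<^sup>+x. \<integral>\<^sup>+y. h x y \<partial>lborel \<partial>lborel) = (\<integral>\<^sup>+y. \<integral>\<^sup>+x. h x y \<partial>lborel \<partial>lborel)"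
  using lborel_pair.Fubini'[OF assms] by simp

lemma lborel_nn_integral_rotate3:
  fixes h :: "'a::euclidean_space \<Rightarrow> 'b::euclidean_space \<Rightarrow> 'c::euclidean_space \<Rightarrow> ennreal"
  assumes [measurable]: "(\<lambda>(x, y, a). h x y a) \<in> borel_measurable (lborel \<Otimes>\<^sub>M (lborel \<Otimes>\<^sub>M lborel))"
  shows "(\<integral>\<^sup>+x. \<integral>\<^sup>+y. \<integral>\<^sup>+a. h x y a \<partial>lborel \<partial>lborel \<partial>lborel)
       = (\<integral>\<^sup>+a. \<integral>\<^sup>+x. \<integral>\<^sup>+y. h x y a \<partial>lborel \<partial>lborel \<partial>lborel)"
proof -
  have "(\<integral>\<^sup>+x. \<integral>\<^sup>+y. \<integral>\<^sup>+a. h x y a \<partial>lborel \<partial>lborel \<partial>lborel)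
      = (\<integral>\<^sup>+x. \<integral>\<^sup>+a. \<integral>\<^sup>+y. h x y a \<partial>lborel \<partial>lborel \<partial>lborel)"
    by (intro nn_integral_cong lborel_nn_integral_swap) measurable
  also have "\<dots> = (\<integral>\<^sup>+a. \<integral>\<^sup>+x. \<integral>\<^sup>+y. h x y a \<partial>lborel \<partial>lborel \<partial>lborel)"
  proof (rule lborel_nn_integral_swap)
    have "(\<lambda>p. (fst (fst p), snd p, snd (fst p)))
        \<in> (lborel \<Otimes>\<^sub>M lborel) \<Otimes>\<^sub>M lborel \<rightarrow>\<^sub>M lborel \<Otimes>\<^sub>M (lborel \<Otimes>\<^sub>M (lborel :: 'c measure))"
      by measurable
    from measurable_comp[OF this assms]
    have "(\<lambda>(xa, y). h (fst xa) y (snd xa)) \<in> borel_measurable ((lborel \<Otimes>\<^sub>M lborel) \<Otimes>\<^sub>M lborel)"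
      by (simp add: comp_def case_prod_beta)
    from lborel.borel_measurable_nn_integral[OF this]
    show "(\<lambda>(x, a). \<integral>\<^sup>+y. h x y a \<partial>lborel) \<in> borel_measurable (lborel \<Otimes>\<^sub>M lborel)"
      by (simp add: case_prod_beta')
  qed
  finally show ?thesis .
qed

lemma emeasure_lborel_ball:
  fixes c :: "'a::euclidean_space"
  assumes "0 \<le> r"
  shows "emeasure lborel (ball c r) = ennreal (r ^ DIM('a) * measure lborel (ball (0::'a) 1))"
  using emeasure_lebesgue_ball_conv_unit_ball[OF assms, of c] emeasure_lborel_ball_finite[of "0::'a" 1] assms
  by (simp add: emeasure_eq_ennreal_measure ennreal_mult)

definition layer :: "real \<Rightarrow> real \<Rightarrow> ennreal" where
  "layer a v = (if 0 < a \<and> a < v then 1 else 0)"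

lemma measurable_layer[measurable (raw)]:
  assumes [measurable]: "f \<in> borel_measurable M" "g \<in> borel_measurable M"
  shows "(\<lambda>x. layer (f x) (g x)) \<in> borel_measurable M"
  unfolding layer_def by measurable

lemma layer_le_1: "layer a v \<le> 1"
  by (simp add: layer_def)

lemma nn_integral_layer: "(\<integral>\<^sup>+a. layer a v \<partial>lborel) = ennreal v"
proof -
  have "(\<lambda>a. layer a v) = indicator {0<..<v}"
    by (auto simp: layer_def fun_eq_iff)
  then show ?thesis by (cases "0 \<le> v") (auto simp: ennreal_neg)
qed

definition level_measure :: "('a::euclidean_space \<Rightarrow> real) \<Rightarrow> real \<Rightarrow> ennreal" where
  "level_measure f a = (\<integral>\<^sup>+x. layer a (f x) \<partial>lborel)"

lemma measurable_level_measure[measurable]: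
  assumes [measurable]: "f \<in> borel_measurable lborel"
  shows "level_measure f \<in> borel_measurable lborel"
  unfolding level_measure_def by measurable

lemma level_measure_nonpos: "a \<le> 0 \<Longrightarrow> level_measure f a = 0"
  by (simp add: level_measure_def layer_def)

lemma layer_cake_powr:
  fixes f :: "'a::euclidean_space \<Rightarrow> real"
  assumes [measurable]: "f \<in> borel_measurable lborel" and nn: "\<And>x. 0 \<le> f x" and t: "0 < t"
  shows "(\<integral>\<^sup>+a. ennreal (a powr (t - 1)) * level_measure f a \<partial>lborel)
       = ennreal (1 / t) * (\<integral>\<^sup>+x. ennreal (f x powr t) \<partial>lborel)"
proof -
  have inner: "(\<integral>\<^sup>+a. ennreal (a powr (t - 1)) * layer a v \<partial>lborel) = ennreal (1 / t) * ennreal (v powr t)"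
    if "0 \<le> v" for v
  proof -
    have "AE a in lborel. ennreal (a powr (t - 1)) * layer a v = ennreal (a powr (t - 1)) * indicator {0..v} a"
      using AE_lborel_singleton[of 0] AE_lborel_singleton[of v] by eventually_elim (auto simp: layer_def)
    then have "(\<integral>\<^sup>+a. ennreal (a powr (t - 1)) * layer a v \<partial>lborel) = ennreal (v powr t / t)"
      using nn_integral_powr_Icc0[of "t - 1" v] that t by (simp add: nn_integral_cong_AE)
    then show ?thesis
      using t by (simp add: ennreal_mult[symmetric])
  qed
  have "(\<integral>\<^sup>+a. ennreal (a powr (t - 1)) * level_measure f a \<partial>lborel)
      = (\<integral>\<^sup>+a. \<integral>\<^sup>+x. ennreal (a powr (t - 1)) * layer a (f x) \<partial>lborel \<partial>lborel)"
    by (simp add: level_measure_def nn_integral_cmult)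
  also have "\<dots> = (\<integral>\<^sup>+x. \<integral>\<^sup>+a. ennreal (a powr (t - 1)) * layer a (f x) \<partial>lborel \<partial>lborel)"
    by (rule lborel_nn_integral_swap) measurable
  also have "\<dots> = ennreal (1 / t) * (\<integral>\<^sup>+x. ennreal (f x powr t) \<partial>lborel)"
    using inner nn by (simp add: nn_integral_cmult)
  finally show ?thesis .
qed

lemma nn_integral_min_powr_le:
  fixes P :: ennreal and Q k :: real
  assumes k: "1 < k" and Q: "0 \<le> Q"
  shows "(\<integral>\<^sup>+c. indicator {0<..} c * min P (ennreal (Q * c powr (-k))) \<partial>lborel)
     \<le> ennreal (k/(k-1)) * epow P (1 - 1/k) * ennreal (Q powr (1/k))"
proof (cases "Q = 0 \<or> P = 0")
  case True
  then have "(\<lambda>c. indicator {0<..} c * min P (ennreal (Q * c powr (-k)))) = (\<lambda>c. 0)"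
    by (auto simp: fun_eq_iff)
  then show ?thesis by simp
next
  case False
  then have Qp: "0 < Q" and Pp: "0 < P" using Q by (auto simp: zero_less_iff_neq_zero)
  show ?thesis
  proof (cases P)
    case top
    then show ?thesis using k Qp by (simp add: ennreal_mult_eq_top_iff)
  next
    case (real p)
    with Pp have p: "P = ennreal p" "0 < p" by auto
    \<comment> \<open>split at the point \<open>c0\<close> where the two terms of the minimum agree\<close>
    define c0 where "c0 = (Q / p) powr (1/k)"
    have c0: "0 < c0" using Qp p by (simp add: c0_def)
    have "c0 powr k = Q / p" using Qp p k by (simp add: c0_def powr_powr)
    then have "c0 powr (1 - k) = c0 * p / Q" using c0 by (simp add: powr_diff)
    then have tail: "Q * (c0 powr (1 - k) / (k - 1)) = p * c0 / (k - 1)"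
      using Qp by simp
    have "(\<integral>\<^sup>+c. indicator {0<..} c * min P (ennreal (Q * c powr (-k))) \<partial>lborel)
        \<le> (\<integral>\<^sup>+c. ennreal p * indicator {0..c0} c + ennreal Q * (ennreal (c powr (-k)) * indicator {c0..} c) \<partial>lborel)"
      using p Qp
      by (intro nn_integral_mono)
         (auto simp: indicator_def min_le_iff_disj ennreal_mult[symmetric] simp del: ennreal_mult')
    also have "\<dots> = ennreal p * ennreal c0 + ennreal Q * ennreal (c0 powr (1 - k) / (k - 1))"
      using nn_integral_powr_atLeast[of "-k" c0] k c0
      by (simp add: nn_integral_add nn_integral_cmult add.commute)
    also have "\<dots> = ennreal (k/(k-1) * (p * c0))"
      using tail p c0 k Qp
      by (simp add: ennreal_mult[symmetric] ennreal_plus[symmetric] field_simps del: ennreal_plus)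
    also have "p * c0 = p powr (1 - 1/k) * Q powr (1/k)"
      using p Qp by (simp add: c0_def powr_divide powr_diff)
    finally show ?thesis
      using p k by (simp add: epow_ennreal ennreal_mult[symmetric] mult.assoc)
  qed
qed

lemma measurable_indicator_atMost[measurable]:
  fixes A B :: "'a \<Rightarrow> real"
  assumes [measurable]: "A \<in> borel_measurable M" "B \<in> borel_measurable M"
  shows "(\<lambda>x. indicator {..B x} (A x) :: ennreal) \<in> borel_measurable M"
proof -
  have "(\<lambda>x. indicator {..B x} (A x) :: ennreal) = (\<lambda>x. if A x \<le> B x then 1 else 0)"
    by (auto simp: indicator_def fun_eq_iff)
  also have "\<dots> \<in> borel_measurable M" by measurable
  finally show ?thesis .
qed

definition riesz_layer :: "real \<Rightarrow> ('a::euclidean_space \<Rightarrow> real) \<Rightarrow> ('a \<Rightarrow> real) \<Rightarrow> real \<Rightarrow> real \<Rightarrow> real \<Rightarrow> ennreal" where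
  "riesz_layer l f g a b c =
     (\<integral>\<^sup>+x. \<integral>\<^sup>+y. layer a (f x) * layer b (g y) * layer c (norm (x - y) powr (-l)) \<partial>lborel \<partial>lborel)"

lemma measurable_riesz_layer[measurable]:
  fixes f g :: "'a::euclidean_space \<Rightarrow> real"
  assumes [measurable]: "f \<in> borel_measurable lborel" "g \<in> borel_measurable lborel"
    "A \<in> borel_measurable M" "B \<in> borel_measurable M" "C \<in> borel_measurable M"
  shows "(\<lambda>x. riesz_layer l f g (A x) (B x) (C x)) \<in> borel_measurable M"
  unfolding riesz_layer_def by measurable

lemma measurable_nn_integral_riesz_layer[measurable]:
  fixes f g :: "'a::euclidean_space \<Rightarrow> real"
  assumes [measurable]: "f \<in> borel_measurable lborel" "g \<in> borel_measurable lborel"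
    "A \<in> borel_measurable M" "B \<in> borel_measurable M"
  shows "(\<lambda>x. \<integral>\<^sup>+c. riesz_layer l f g (A x) (B x) c \<partial>lborel) \<in> borel_measurable M"
proof -
  have "(\<lambda>(x, c). riesz_layer l f g (A x) (B x) c) \<in> borel_measurable (M \<Otimes>\<^sub>M lborel)"
    by measurable
  from lborel.borel_measurable_nn_integral[OF this] show ?thesis by simp
qed

lemma riesz_layer_nonpos: "c \<le> 0 \<Longrightarrow> riesz_layer l f g a b c = 0"
  by (simp add: riesz_layer_def layer_def)

lemma riesz_layer_swap:
  fixes f g :: "'a::euclidean_space \<Rightarrow> real"
  assumes [measurable]: "f \<in> borel_measurable lborel" "g \<in> borel_measurable lborel"
  shows "riesz_layer l f g a b c = riesz_layer l g f b a c"
proof -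
  have "riesz_layer l f g a b c
      = (\<integral>\<^sup>+y. \<integral>\<^sup>+x. layer a (f x) * layer b (g y) * layer c (norm (x - y) powr (-l)) \<partial>lborel \<partial>lborel)"
    unfolding riesz_layer_def by (rule lborel_nn_integral_swap) measurable
  then show ?thesis
    unfolding riesz_layer_def by (simp add: norm_minus_commute mult_ac)
qed

lemma riesz_layer_le_level_measures:
  assumes [measurable]: "f \<in> borel_measurable lborel" "g \<in> borel_measurable lborel"
  shows "riesz_layer l f g a b c \<le> level_measure f a * level_measure g b"
proof -
  have "riesz_layer l f g a b c \<le> (\<integral>\<^sup>+x. \<integral>\<^sup>+y. layer a (f x) * layer b (g y) \<partial>lborel \<partial>lborel)"
    unfolding riesz_layer_def
    by (intro nn_integral_mono) (auto intro!: mult_right_le_one_le simp: layer_le_1 layer_def)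
  also have "\<dots> = level_measure f a * level_measure g b"
    by (simp add: level_measure_def nn_integral_cmult nn_integral_multc)
  finally show ?thesis .
qed

lemma nn_integral_layer_norm_powr_le:
  fixes x :: "'a::euclidean_space"
  assumes l: "0 < l" and c: "0 < c"
  shows "(\<integral>\<^sup>+y. layer c (norm (x - y) powr (-l)) \<partial>lborel)
     \<le> ennreal (measure lborel (ball (0::'a) 1) * c powr (- (DIM('a) / l)))"
proof -
  define \<rho> where "\<rho> = c powr (-1/l)"
  have \<rho>: "0 < \<rho>" using c by (simp add: \<rho>_def)
  have "layer c (norm (x - y) powr (-l)) \<le> indicator (ball x \<rho>) y" for y
  proof (cases "c < norm (x - y) powr (-l)")
    case True
    then have "x \<noteq> y" using c by auto
    moreover have "(norm (x - y) powr (-l)) powr (-1/l) < \<rho>"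
      using True c l by (auto simp: \<rho>_def intro!: powr_less_mono2_neg)
    ultimately show ?thesis using l by (simp add: powr_powr indicator_def dist_norm layer_le_1)
  qed (simp add: layer_def)
  then have "(\<integral>\<^sup>+y. layer c (norm (x - y) powr (-l)) \<partial>lborel) \<le> (\<integral>\<^sup>+y. indicator (ball x \<rho>) y \<partial>lborel)"
    by (rule nn_integral_mono)
  also have "\<dots> = ennreal (measure lborel (ball (0::'a) 1) * \<rho> ^ DIM('a))"
    using \<rho> by (simp add: emeasure_lborel_ball mult.commute)
  also have "\<rho> ^ DIM('a) = c powr (- (DIM('a) / l))"
    using c by (simp add: \<rho>_def powr_realpow[symmetric] powr_powr)
  finally show ?thesis .
qed

lemma riesz_layer_le_ball:
  fixes f g :: "'a::euclidean_space \<Rightarrow> real"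
  assumes [measurable]: "f \<in> borel_measurable lborel" "g \<in> borel_measurable lborel"
    and "0 < l" "0 < c"
  shows "riesz_layer l f g a b c
     \<le> level_measure f a * ennreal (measure lborel (ball (0::'a) 1) * c powr (- (DIM('a) / l)))"
proof -
  have "riesz_layer l f g a b c
      \<le> (\<integral>\<^sup>+x. layer a (f x) * \<integral>\<^sup>+y. layer c (norm (x - y) powr (-l)) \<partial>lborel \<partial>lborel)"
    unfolding riesz_layer_def
    by (intro nn_integral_mono)
       (auto simp: nn_integral_cmult[symmetric] mult.assoc layer_def intro!: nn_integral_mono)
  also have "\<dots> \<le> (\<integral>\<^sup>+x. layer a (f x) * ennreal (measure lborel (ball (0::'a) 1) * c powr (- (DIM('a) / l))) \<partial>lborel)"
    using assms by (intro nn_integral_mono mult_left_mono nn_integral_layer_norm_powr_le) auto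
  finally show ?thesis
    by (simp add: level_measure_def nn_integral_multc)
qed

lemma nn_integral_riesz_layer_le:
  fixes f g :: "'a::euclidean_space \<Rightarrow> real" and l :: real
  assumes [measurable]: "f \<in> borel_measurable lborel" "g \<in> borel_measurable lborel"
    and l: "0 < l" "l < DIM('a)"
  defines "k \<equiv> DIM('a) / l"
  shows "(\<integral>\<^sup>+c. riesz_layer l f g a b c \<partial>lborel)
     \<le> level_measure f a * (ennreal (k/(k-1) * measure lborel (ball (0::'a) 1) powr (1/k))
          * epow (level_measure g b) (1 - 1/k))"
proof -
  let ?\<omega> = "measure lborel (ball (0::'a) 1)"
  have k: "1 < k" using l by (simp add: k_def)
  have "riesz_layer l f g a b c
      \<le> level_measure f a * (indicator {0<..} c * min (level_measure g b) (ennreal (?\<omega> * c powr (-k))))" for c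
  proof (cases "0 < c")
    case True
    then show ?thesis
      using riesz_layer_le_level_measures[of f g l a b c] riesz_layer_le_ball[of f g l c a b] l
      by (auto simp: k_def min_def)
  qed (simp add: riesz_layer_nonpos)
  then have "(\<integral>\<^sup>+c. riesz_layer l f g a b c \<partial>lborel)
      \<le> level_measure f a * (\<integral>\<^sup>+c. indicator {0<..} c * min (level_measure g b) (ennreal (?\<omega> * c powr (-k))) \<partial>lborel)"
    by (subst nn_integral_cmult[symmetric]) (auto intro: nn_integral_mono)
  also have "\<dots> \<le> level_measure f a * (ennreal (k/(k-1)) * epow (level_measure g b) (1 - 1/k) * ennreal (?\<omega> powr (1/k)))"
    by (intro mult_left_mono nn_integral_min_powr_le k) auto
  also have "ennreal (k/(k-1)) * epow (level_measure g b) (1 - 1/k) * ennreal (?\<omega> powr (1/k))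
      = ennreal (k/(k-1) * ?\<omega> powr (1/k)) * epow (level_measure g b) (1 - 1/k)"
    using k by (subst ennreal_mult) (auto simp: mult_ac)
  finally show ?thesis .
qed

lemma Youngs_inequality_balanced:
  fixes G e \<epsilon> b \<theta> s :: real
  assumes G: "0 \<le> G" and b: "0 < b" and \<epsilon>: "0 < \<epsilon>" and \<theta>: "0 < \<theta>" "\<theta> < 1"
    and e: "e = (s - 1) * (1 - \<theta>) / \<theta>"
  shows "G powr (1 - \<theta>) \<le> (1 - \<theta>) * (\<epsilon> * b powr (s - 1) * G) + \<theta> * (\<epsilon> powr (-(1-\<theta>)/\<theta>) * b powr (-e))"
proof (cases "G = 0")
  case False
  define u where "u = \<epsilon> * b powr (s - 1) * G"
  define v where "v = \<epsilon> powr (-(1-\<theta>)/\<theta>) * b powr (-e)"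
  have "u powr (1 - \<theta>) * v powr \<theta>
      = (\<epsilon> powr (1 - \<theta>) * \<epsilon> powr (-(1-\<theta>))) * (b powr ((s - 1) * (1 - \<theta>)) * b powr (-((s - 1) * (1 - \<theta>)))) * G powr (1 - \<theta>)"
    using G b \<epsilon> \<theta> by (simp add: u_def v_def powr_mult powr_powr e mult_ac)
  also have "\<dots> = G powr (1 - \<theta>)"
    using b \<epsilon> by (simp add: powr_add[symmetric])
  finally show ?thesis
    using Youngs_inequality_0[of "1 - \<theta>" \<theta> u v] G False b \<epsilon> \<theta> by (simp add: u_def v_def)
qed (use \<theta> b \<epsilon> in simp)

lemma nn_integral_epow_atMost_le:
  fixes G :: "real \<Rightarrow> ennreal" and s \<theta> B :: real
  assumes G [measurable]: "G \<in> borel_measurable lborel"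
    and G0: "\<And>b. b \<le> 0 \<Longrightarrow> G b = 0"
    and moment: "(\<integral>\<^sup>+b. ennreal (b powr (s - 1)) * G b \<partial>lborel) \<le> ennreal (1/s)"
    and s: "1 < s" and \<theta>: "0 < \<theta>" "\<theta> < 1" and s\<theta>: "s * (1 - \<theta>) < 1" and B: "0 < B"
  defines "e \<equiv> (s - 1) * (1 - \<theta>) / \<theta>"
  shows "(\<integral>\<^sup>+b. indicator {..B} b * epow (G b) (1 - \<theta>) \<partial>lborel)
     \<le> ennreal (((1-\<theta>)/s + \<theta>/(1-e)) * B powr (1 - s*(1-\<theta>)))"
proof -
  have "0 \<le> (s - 1) * (1 - \<theta>)"
    using s \<theta> by simp
  moreover have "(s - 1) * (1 - \<theta>) < \<theta>"
    using s\<theta> by (simp add: algebra_simps)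
  ultimately
  have e: "0 \<le> e" "e < 1"
    using \<theta> by (auto simp: e_def)
  define \<epsilon> where "\<epsilon> = B powr (1 - s*(1-\<theta>))"
  have \<epsilon>: "0 < \<epsilon>" using B by (simp add: \<epsilon>_def)
  have "indicator {..B} b * epow (G b) (1 - \<theta>)
     \<le> ennreal ((1-\<theta>)*\<epsilon>) * (ennreal (b powr (s - 1)) * G b)
        + ennreal (\<theta> * \<epsilon> powr (-(1-\<theta>)/\<theta>)) * (ennreal (b powr (-e)) * indicator {0..B} b)" for b
  proof (cases "0 < b \<and> b \<le> B")
    case True
    show ?thesis
    proof (cases "G b")
      case (real g)
      have "g powr (1 - \<theta>) \<le> (1 - \<theta>) * (\<epsilon> * b powr (s - 1) * g) + \<theta> * (\<epsilon> powr (-(1-\<theta>)/\<theta>) * b powr (-e))"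
        using True real \<epsilon> \<theta> by (intro Youngs_inequality_balanced) (auto simp: e_def)
      then show ?thesis
        using True real \<theta> \<epsilon>
        by (simp add: epow_ennreal indicator_def ennreal_mult[symmetric] ennreal_plus[symmetric] mult_ac
            del: ennreal_plus)
    qed (use True \<epsilon> \<theta> in \<open>simp add: ennreal_mult_eq_top_iff\<close>)
  qed (use G0 in \<open>auto simp: indicator_def\<close>)
  then have "(\<integral>\<^sup>+b. indicator {..B} b * epow (G b) (1 - \<theta>) \<partial>lborel)
      \<le> ennreal ((1-\<theta>)*\<epsilon>) * (\<integral>\<^sup>+b. ennreal (b powr (s - 1)) * G b \<partial>lborel)
        + ennreal (\<theta> * \<epsilon> powr (-(1-\<theta>)/\<theta>)) * (\<integral>\<^sup>+b. ennreal (b powr (-e)) * indicator {0..B} b \<partial>lborel)"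
    by (subst nn_integral_cmult[symmetric] nn_integral_add[symmetric], measurable)+
       (rule nn_integral_mono)
  also have "\<dots> \<le> ennreal ((1-\<theta>)*\<epsilon>) * ennreal (1/s)
        + ennreal (\<theta> * \<epsilon> powr (-(1-\<theta>)/\<theta>)) * ennreal (B powr (-e + 1) / (-e + 1))"
    using nn_integral_powr_Icc0[of "-e" B] e B by (intro add_mono mult_left_mono moment) auto
  also have "\<epsilon> powr (-(1-\<theta>)/\<theta>) * B powr (-e + 1) = \<epsilon>"
  proof -
    have exponent: "(1 - s*(1-\<theta>)) * (-(1-\<theta>)/\<theta>) + (-e + 1) = 1 - s*(1-\<theta>)"
      using \<theta> by (simp add: e_def field_simps)
    show ?thesis
      unfolding \<epsilon>_def powr_powr powr_add[symmetric] exponent ..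

  qed
  then have "ennreal ((1-\<theta>)*\<epsilon>) * ennreal (1/s) + ennreal (\<theta> * \<epsilon> powr (-(1-\<theta>)/\<theta>)) * ennreal (B powr (-e + 1) / (-e + 1))
      = ennreal (((1-\<theta>)/s + \<theta>/(1-e)) * \<epsilon>)"
    using \<theta> \<epsilon> e s
    by (simp add: ennreal_mult[symmetric] ennreal_plus[symmetric] field_simps del: ennreal_plus)
  finally show ?thesis by (simp add: \<epsilon>_def)
qed

definition Lp_unit_nonneg :: "real \<Rightarrow> ('a::euclidean_space \<Rightarrow> real) \<Rightarrow> bool" where
  "Lp_unit_nonneg t f \<longleftrightarrow>
     f \<in> borel_measurable lborel \<and> (\<forall>x. 0 \<le> f x) \<and> (\<integral>\<^sup>+x. ennreal (f x powr t) \<partial>lborel) \<le> 1"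

lemma riesz_half_slice_bound:
  fixes l \<tau> s :: real
  assumes \<tau>: "1 < \<tau>" and s: "1 < s" and l: "0 < l" "l < DIM('a::euclidean_space)"
    and rel: "1/\<tau> + 1/s = 2 - l / DIM('a)"
  obtains K where "0 \<le> K"
    "\<And>f g :: 'a \<Rightarrow> real. \<And>a. f \<in> borel_measurable lborel \<Longrightarrow> Lp_unit_nonneg s g \<Longrightarrow>
      (\<integral>\<^sup>+b. indicator {..a powr (\<tau>/s)} b * (\<integral>\<^sup>+c. riesz_layer l f g a b c \<partial>lborel) \<partial>lborel)
        \<le> ennreal K * (ennreal (a powr (\<tau> - 1)) * level_measure f a)"
proof -
  define \<theta> where "\<theta> = l / DIM('a)"
  define k where "k = DIM('a) / l"
  have \<theta>: "0 < \<theta>" "\<theta> < 1" and k: "1 < k" and k\<theta>: "1/k = \<theta>"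
    using l by (auto simp: \<theta>_def k_def)
  define Ck where "Ck = k/(k-1) * measure lborel (ball (0::'a) 1) powr (1/k)"
  define e where "e = (s - 1) * (1 - \<theta>) / \<theta>"
  define C1 where "C1 = (1-\<theta>)/s + \<theta>/(1-e)"
  have 1: "1 - \<theta> = 1/\<tau> + 1/s - 1"
    using rel by (simp add: \<theta>_def)
  then have "s * (1 - \<theta>) = s/\<tau> + 1 - s"
    using s by (simp add: field_simps)
  moreover have "s / \<tau> < s"
    using s \<tau> by (simp add: divide_less_eq)
  ultimately have s\<theta>: "s * (1 - \<theta>) < 1"
    by simp
  then have "e < 1"
    using \<theta> by (simp add: e_def algebra_simps)
  then have C: "0 \<le> Ck" "0 \<le> C1"
    using k \<theta> s by (auto simp: Ck_def C1_def)
  have "(\<integral>\<^sup>+b. indicator {..a powr (\<tau>/s)} b * (\<integral>\<^sup>+c. riesz_layer l f g a b c \<partial>lborel) \<partial>lborel)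
      \<le> ennreal (Ck * C1) * (ennreal (a powr (\<tau> - 1)) * level_measure f a)"
    if [measurable]: "f \<in> borel_measurable lborel" and g: "Lp_unit_nonneg s g" for f g :: "'a \<Rightarrow> real" and a
  proof (cases "0 < a")
    case True
    from g have [measurable]: "g \<in> borel_measurable lborel" and nng: "\<And>x. 0 \<le> g x"
      and ng: "(\<integral>\<^sup>+x. ennreal (g x powr s) \<partial>lborel) \<le> 1"
      by (auto simp: Lp_unit_nonneg_def)
    have moment_g: "(\<integral>\<^sup>+b. ennreal (b powr (s - 1)) * level_measure g b \<partial>lborel) \<le> ennreal (1/s)"
      using layer_cake_powr[of g s] ng nng s mult_left_mono[OF ng, of "ennreal (1/s)"] by simp
    have "(\<integral>\<^sup>+b. indicator {..a powr (\<tau>/s)} b * (\<integral>\<^sup>+c. riesz_layer l f g a b c \<partial>lborel) \<partial>lborel)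
      \<le> (\<integral>\<^sup>+b. indicator {..a powr (\<tau>/s)} b * (level_measure f a * (ennreal Ck * epow (level_measure g b) (1 - \<theta>))) \<partial>lborel)"
      using nn_integral_riesz_layer_le[of f g l a] l k\<theta>
      by (intro nn_integral_mono mult_left_mono) (auto simp: Ck_def k_def)
    also have "\<dots> = level_measure f a * ennreal Ck * (\<integral>\<^sup>+b. indicator {..a powr (\<tau>/s)} b * epow (level_measure g b) (1 - \<theta>) \<partial>lborel)"
      by (subst nn_integral_cmult[symmetric]) (auto simp: mult_ac)
    also have "\<dots> \<le> level_measure f a * ennreal Ck * ennreal (C1 * (a powr (\<tau>/s)) powr (1 - s*(1-\<theta>)))"
      unfolding C1_def e_def using True
      by (intro mult_left_mono nn_integral_epow_atMost_le moment_g s \<theta> s\<theta>) (auto simp: level_measure_nonpos)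
    also have "(a powr (\<tau>/s)) powr (1 - s*(1-\<theta>)) = a powr (\<tau> - 1)"
    proof -
      have "\<tau>/s * (1 - s*(1-\<theta>)) = \<tau> - 1"
        using 1 s \<tau> by (simp add: field_simps)
      then show ?thesis by (simp add: powr_powr)
    qed
    finally show ?thesis
      using C by (simp add: ennreal_mult mult_ac)
  qed (simp add: riesz_layer_def layer_def)
  moreover have "0 \<le> Ck * C1"
    using C by simp
  ultimately show thesis
    by (rule that[rotated])
qed

lemma riesz_half_bound:
  fixes l \<tau> s :: real
  assumes \<tau>: "1 < \<tau>" and s: "1 < s" and l: "0 < l" "l < DIM('a::euclidean_space)"
    and rel: "1/\<tau> + 1/s = 2 - l / DIM('a)"
  obtains C where "0 \<le> C"
    "\<And>f g :: 'a \<Rightarrow> real. Lp_unit_nonneg \<tau> f \<Longrightarrow> Lp_unit_nonneg s g \<Longrightarrow>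
      (\<integral>\<^sup>+a. \<integral>\<^sup>+b. indicator {..a powr (\<tau>/s)} b * (\<integral>\<^sup>+c. riesz_layer l f g a b c \<partial>lborel) \<partial>lborel \<partial>lborel)
        \<le> ennreal C"
proof -
  obtain K where K: "0 \<le> K" and slice: "\<And>f g :: 'a \<Rightarrow> real. \<And>a. f \<in> borel_measurable lborel \<Longrightarrow>
      Lp_unit_nonneg s g \<Longrightarrow>
      (\<integral>\<^sup>+b. indicator {..a powr (\<tau>/s)} b * (\<integral>\<^sup>+c. riesz_layer l f g a b c \<partial>lborel) \<partial>lborel)
        \<le> ennreal K * (ennreal (a powr (\<tau> - 1)) * level_measure f a)"
    using riesz_half_slice_bound[OF \<tau> s l rel] by blast
  have "(\<integral>\<^sup>+a. \<integral>\<^sup>+b. indicator {..a powr (\<tau>/s)} b * (\<integral>\<^sup>+c. riesz_layer l f g a b c \<partial>lborel) \<partial>lborel \<partial>lborel)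
      \<le> ennreal (K / \<tau>)"
    if f: "Lp_unit_nonneg \<tau> f" and g: "Lp_unit_nonneg s g" for f g :: "'a \<Rightarrow> real"
  proof -
    from f have [measurable]: "f \<in> borel_measurable lborel" and nnf: "\<And>x. 0 \<le> f x"
      and nf: "(\<integral>\<^sup>+x. ennreal (f x powr \<tau>) \<partial>lborel) \<le> 1"
      by (auto simp: Lp_unit_nonneg_def)
    have "(\<integral>\<^sup>+a. \<integral>\<^sup>+b. indicator {..a powr (\<tau>/s)} b * (\<integral>\<^sup>+c. riesz_layer l f g a b c \<partial>lborel) \<partial>lborel \<partial>lborel)
       \<le> ennreal K * (\<integral>\<^sup>+a. ennreal (a powr (\<tau> - 1)) * level_measure f a \<partial>lborel)"
      using slice[OF _ g] by (subst nn_integral_cmult[symmetric]) (auto intro: nn_integral_mono)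
    also have "\<dots> = ennreal K * (ennreal (1/\<tau>) * (\<integral>\<^sup>+x. ennreal (f x powr \<tau>) \<partial>lborel))"
      using \<tau> by (simp add: layer_cake_powr nnf)
    also have "\<dots> \<le> ennreal K * (ennreal (1/\<tau>) * 1)"
      using nf by (intro mult_left_mono) auto
    finally show ?thesis
      using K \<tau> by (simp add: ennreal_mult[symmetric])
  qed
  then show thesis
    using K \<tau> by (intro that[of "K / \<tau>"]) auto
qed

definition riesz_pairing :: "real \<Rightarrow> ('a::euclidean_space \<Rightarrow> real) \<Rightarrow> ('a \<Rightarrow> real) \<Rightarrow> ennreal" where
  "riesz_pairing l f g = (\<integral>\<^sup>+x. \<integral>\<^sup>+y. ennreal (f x * g y * norm (x - y) powr (-l)) \<partial>lborel \<partial>lborel)"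

lemma riesz_pairing_layer_cake:
  fixes f g :: "'a::euclidean_space \<Rightarrow> real"
  assumes [measurable]: "f \<in> borel_measurable lborel" "g \<in> borel_measurable lborel"
    and nnf: "\<And>x. 0 \<le> f x" and nng: "\<And>x. 0 \<le> g x"
  shows "riesz_pairing l f g = (\<integral>\<^sup>+a. \<integral>\<^sup>+b. \<integral>\<^sup>+c. riesz_layer l f g a b c \<partial>lborel \<partial>lborel \<partial>lborel)"
proof -
  let ?h = "\<lambda>x y a b c. layer a (f x) * layer b (g y) * layer c (norm (x - y) powr (-l))"
  have "riesz_pairing l f g = (\<integral>\<^sup>+x. \<integral>\<^sup>+y. \<integral>\<^sup>+a. \<integral>\<^sup>+b. \<integral>\<^sup>+c. ?h x y a b c
      \<partial>lborel \<partial>lborel \<partial>lborel \<partial>lborel \<partial>lborel)"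
    unfolding riesz_pairing_def
    using nnf nng by (simp add: nn_integral_layer ennreal_mult nn_integral_cmult nn_integral_multc)
  also have "\<dots> = (\<integral>\<^sup>+a. \<integral>\<^sup>+x. \<integral>\<^sup>+y. \<integral>\<^sup>+b. \<integral>\<^sup>+c. ?h x y a b c
      \<partial>lborel \<partial>lborel \<partial>lborel \<partial>lborel \<partial>lborel)"
    by (rule lborel_nn_integral_rotate3) measurable
  also have "\<dots> = (\<integral>\<^sup>+a. \<integral>\<^sup>+b. \<integral>\<^sup>+x. \<integral>\<^sup>+y. \<integral>\<^sup>+c. ?h x y a b c
      \<partial>lborel \<partial>lborel \<partial>lborel \<partial>lborel \<partial>lborel)"
    by (intro nn_integral_cong lborel_nn_integral_rotate3) measurable
  also have "\<dots> = (\<integral>\<^sup>+a. \<integral>\<^sup>+b. \<integral>\<^sup>+c. \<integral>\<^sup>+x. \<integral>\<^sup>+y. ?h x y a b c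
      \<partial>lborel \<partial>lborel \<partial>lborel \<partial>lborel \<partial>lborel)"
    by (intro nn_integral_cong lborel_nn_integral_rotate3) measurable
  finally show ?thesis
    by (simp add: riesz_layer_def)
qed

lemma indicator_powr_cover:
  fixes a b \<tau> s :: real
  assumes "0 < \<tau>" "0 < s"
  shows "1 \<le> (indicator {..a powr (\<tau>/s)} b + indicator {..b powr (s/\<tau>)} a :: ennreal)"
proof (cases "a \<le> b powr (s/\<tau>)")
  case False
  then have "0 < a" "b powr (s/\<tau>) < a"
    using powr_ge_zero[of b "s/\<tau>"] by linarith+
  then have "b \<le> a powr (\<tau>/s)"
    using assms powr_less_mono2[of "\<tau>/s" "b powr (s/\<tau>)" a]
    by (cases "0 < b") (auto simp: powr_powr intro: order.trans[OF _ powr_ge_zero])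
  then show ?thesis by (simp add: indicator_def)
qed (simp add: indicator_def)

lemma riesz_pairing_le_normalized:
  fixes l \<tau> s :: real
  assumes \<tau>: "1 < \<tau>" and s: "1 < s" and l: "0 < l" "l < DIM('a::euclidean_space)"
    and rel: "1/\<tau> + 1/s = 2 - l / DIM('a)"
  obtains C where "0 \<le> C"
    "\<And>f g :: 'a \<Rightarrow> real. Lp_unit_nonneg \<tau> f \<Longrightarrow> Lp_unit_nonneg s g \<Longrightarrow> riesz_pairing l f g \<le> ennreal C"
proof -
  have rel': "1/s + 1/\<tau> = 2 - l / DIM('a)" using rel by simp
  obtain C1 where C1: "0 \<le> C1" and half1: "\<And>f g :: 'a \<Rightarrow> real. Lp_unit_nonneg \<tau> f \<Longrightarrow> Lp_unit_nonneg s g \<Longrightarrow>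
      (\<integral>\<^sup>+a. \<integral>\<^sup>+b. indicator {..a powr (\<tau>/s)} b * (\<integral>\<^sup>+c. riesz_layer l f g a b c \<partial>lborel) \<partial>lborel \<partial>lborel)
        \<le> ennreal C1"
    using riesz_half_bound[OF \<tau> s l rel] by blast
  obtain C2 where C2: "0 \<le> C2" and half2: "\<And>g f :: 'a \<Rightarrow> real. Lp_unit_nonneg s g \<Longrightarrow> Lp_unit_nonneg \<tau> f \<Longrightarrow>
      (\<integral>\<^sup>+b. \<integral>\<^sup>+a. indicator {..b powr (s/\<tau>)} a * (\<integral>\<^sup>+c. riesz_layer l g f b a c \<partial>lborel) \<partial>lborel \<partial>lborel)
        \<le> ennreal C2"
    using riesz_half_bound[OF s \<tau> l rel'] by blast
  have "riesz_pairing l f g \<le> ennreal (C1 + C2)"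
    if f: "Lp_unit_nonneg \<tau> f" and g: "Lp_unit_nonneg s g" for f g :: "'a \<Rightarrow> real"
  proof -
    from f g have [measurable]: "f \<in> borel_measurable lborel" "g \<in> borel_measurable lborel"
      and nn: "\<And>x. 0 \<le> f x" "\<And>x. 0 \<le> g x"
      by (auto simp: Lp_unit_nonneg_def)
    let ?J = "\<lambda>a b. \<integral>\<^sup>+c. riesz_layer l f g a b c \<partial>lborel"
    have cover: "?J a b \<le> indicator {..a powr (\<tau>/s)} b * ?J a b + indicator {..b powr (s/\<tau>)} a * ?J a b"
      for a b
      using indicator_powr_cover[of \<tau> s a b] \<tau> s mult_right_mono[of 1 _ "?J a b"]
      by (simp add: distrib_right[symmetric])
    have "riesz_pairing l f g = (\<integral>\<^sup>+a. \<integral>\<^sup>+b. ?J a b \<partial>lborel \<partial>lborel)"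
      using nn by (intro riesz_pairing_layer_cake) auto
    also have "\<dots> \<le> (\<integral>\<^sup>+a. \<integral>\<^sup>+b. indicator {..a powr (\<tau>/s)} b * ?J a b + indicator {..b powr (s/\<tau>)} a * ?J a b \<partial>lborel \<partial>lborel)"
      by (intro nn_integral_mono cover)
    also have "\<dots> = (\<integral>\<^sup>+a. (\<integral>\<^sup>+b. indicator {..a powr (\<tau>/s)} b * ?J a b \<partial>lborel)
        + (\<integral>\<^sup>+b. indicator {..b powr (s/\<tau>)} a * ?J a b \<partial>lborel) \<partial>lborel)"
      by (intro nn_integral_cong nn_integral_add) measurable
    also have "\<dots> = (\<integral>\<^sup>+a. \<integral>\<^sup>+b. indicator {..a powr (\<tau>/s)} b * ?J a b \<partial>lborel \<partial>lborel)
        + (\<integral>\<^sup>+a. \<integral>\<^sup>+b. indicator {..b powr (s/\<tau>)} a * ?J a b \<partial>lborel \<partial>lborel)"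
      by (rule nn_integral_add) measurable
    also have "(\<integral>\<^sup>+a. \<integral>\<^sup>+b. indicator {..b powr (s/\<tau>)} a * ?J a b \<partial>lborel \<partial>lborel)
        = (\<integral>\<^sup>+b. \<integral>\<^sup>+a. indicator {..b powr (s/\<tau>)} a * (\<integral>\<^sup>+c. riesz_layer l g f b a c \<partial>lborel) \<partial>lborel \<partial>lborel)"
    proof -
      have swap: "riesz_layer l f g a b = riesz_layer l g f b a" for a b
        using riesz_layer_swap[of f g l a b] by (auto simp: fun_eq_iff)
      show ?thesis
        by (subst lborel_nn_integral_swap, measurable) (simp add: swap)
    qed
    finally show ?thesis
      using half1[OF f g] half2[OF g f] C1 C2 by (simp add: add_mono order_trans)
  qed
  with C1 C2 show thesis
    by (intro that[of "C1 + C2"]) auto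
qed

lemma AE_eq_0_of_nn_integral_powr_eq_0:
  fixes f :: "'a \<Rightarrow> real"
  assumes [measurable]: "f \<in> borel_measurable M" and "\<And>x. 0 \<le> f x"
    and "(\<integral>\<^sup>+x. ennreal (f x powr t) \<partial>M) = 0"
  shows "AE x in M. f x = 0"
  using assms by (subst (asm) nn_integral_0_iff_AE) (auto elim!: eventually_mono simp: order.antisym)

lemma riesz_pairing_eq_0:
  fixes f g :: "'a::euclidean_space \<Rightarrow> real"
  assumes "(AE x in lborel. f x = 0) \<or> (AE y in lborel. g y = 0)"
  shows "riesz_pairing l f g = 0"
proof -
  have "AE x in lborel. (\<integral>\<^sup>+y. ennreal (f x * g y * norm (x - y) powr (-l)) \<partial>lborel) = 0"
    using assms
  proof
    assume g0: "AE y in lborel. g y = 0"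
    have "(\<integral>\<^sup>+y. ennreal (f x * g y * norm (x - y) powr (-l)) \<partial>lborel) = (\<integral>\<^sup>+y. 0 \<partial>(lborel :: 'a measure))" for x
      by (rule nn_integral_cong_AE) (use g0 in \<open>auto elim!: eventually_mono\<close>)
    then show ?thesis by simp
  qed (auto elim!: eventually_mono)
  then show ?thesis
    unfolding riesz_pairing_def by (simp add: nn_integral_cong_AE)
qed

lemma riesz_pairing_cmult:
  fixes f g :: "'a::euclidean_space \<Rightarrow> real"
  assumes [measurable]: "f \<in> borel_measurable lborel" "g \<in> borel_measurable lborel"
    and "0 \<le> \<alpha>" "0 \<le> \<beta>" "\<And>x. 0 \<le> f x" "\<And>y. 0 \<le> g y"
  shows "riesz_pairing l (\<lambda>x. \<alpha> * f x) (\<lambda>y. \<beta> * g y) = ennreal (\<alpha> * \<beta>) * riesz_pairing l f g"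
proof -
  have "ennreal (\<alpha> * f x * (\<beta> * g y) * norm (x - y) powr (-l))
      = ennreal (\<alpha> * \<beta>) * ennreal (f x * g y * norm (x - y) powr (-l))" for x y
    using assms by (simp add: ennreal_mult[symmetric] mult_ac)
  then show ?thesis
    unfolding riesz_pairing_def by (simp add: nn_integral_cmult)
qed

lemma nn_integral_powr_divide:
  assumes [measurable]: "f \<in> borel_measurable M" and "\<And>x. 0 \<le> f x" "0 < \<alpha>"
  shows "(\<integral>\<^sup>+x. ennreal ((f x / \<alpha>) powr t) \<partial>M) = ennreal (1 / \<alpha> powr t) * (\<integral>\<^sup>+x. ennreal (f x powr t) \<partial>M)"
  using assms by (simp add: powr_divide ennreal_mult[symmetric] nn_integral_cmult[symmetric] mult.commute)

lemma riesz_pairing_le_by_scaling: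
  fixes f g :: "'a::euclidean_space \<Rightarrow> real" and A B C :: real
  assumes unit: "\<And>f g :: 'a \<Rightarrow> real. Lp_unit_nonneg \<tau> f \<Longrightarrow> Lp_unit_nonneg s g \<Longrightarrow> riesz_pairing l f g \<le> ennreal C"
    and [measurable]: "f \<in> borel_measurable lborel" "g \<in> borel_measurable lborel"
    and nnf: "\<And>x. 0 \<le> f x" and nng: "\<And>x. 0 \<le> g x" and "0 < \<tau>" "0 < s"
    and A: "(\<integral>\<^sup>+x. ennreal (f x powr \<tau>) \<partial>lborel) = ennreal A" "0 < A"
    and B: "(\<integral>\<^sup>+x. ennreal (g x powr s) \<partial>lborel) = ennreal B" "0 < B"
  shows "riesz_pairing l f g \<le> ennreal (A powr (1/\<tau>) * B powr (1/s)) * ennreal C"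
proof -
  define \<alpha> where "\<alpha> = A powr (1/\<tau>)"
  define \<beta> where "\<beta> = B powr (1/s)"
  have \<alpha>\<beta>: "0 < \<alpha>" "0 < \<beta>" "\<alpha> powr \<tau> = A" "\<beta> powr s = B"
    using A B \<open>0 < \<tau>\<close> \<open>0 < s\<close> by (auto simp: \<alpha>_def \<beta>_def powr_powr)
  have "Lp_unit_nonneg \<tau> (\<lambda>x. f x / \<alpha>)" "Lp_unit_nonneg s (\<lambda>x. g x / \<beta>)"
    using A B \<alpha>\<beta> nnf nng by (auto simp: Lp_unit_nonneg_def nn_integral_powr_divide ennreal_mult[symmetric])
  then have "riesz_pairing l (\<lambda>x. f x / \<alpha>) (\<lambda>x. g x / \<beta>) \<le> ennreal C"
    by (rule unit)
  moreover have "riesz_pairing l f g = ennreal (\<alpha> * \<beta>) * riesz_pairing l (\<lambda>x. f x / \<alpha>) (\<lambda>x. g x / \<beta>)"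
    using riesz_pairing_cmult[of "\<lambda>x. f x / \<alpha>" "\<lambda>x. g x / \<beta>" \<alpha> \<beta> l] \<alpha>\<beta> nnf nng by simp
  ultimately show ?thesis
    by (simp add: \<alpha>_def \<beta>_def mult_left_mono)
qed

lemma riesz_pairing_le:
  fixes l \<tau> s :: real
  assumes \<tau>: "1 < \<tau>" and s: "1 < s" and l: "0 < l" "l < DIM('a::euclidean_space)"
    and rel: "1/\<tau> + 1/s = 2 - l / DIM('a)"
  obtains C where "0 < C"
    "\<And>f g :: 'a \<Rightarrow> real. f \<in> borel_measurable lborel \<Longrightarrow> g \<in> borel_measurable lborel \<Longrightarrow>
      (\<And>x. 0 \<le> f x) \<Longrightarrow> (\<And>x. 0 \<le> g x) \<Longrightarrow>
      riesz_pairing l f g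
        \<le> ennreal C * epow (\<integral>\<^sup>+x. ennreal (f x powr \<tau>) \<partial>lborel) (1/\<tau>) * epow (\<integral>\<^sup>+x. ennreal (g x powr s) \<partial>lborel) (1/s)"
proof -
  obtain C0 where C0: "0 \<le> C0"
    and unit: "\<And>f g :: 'a \<Rightarrow> real. Lp_unit_nonneg \<tau> f \<Longrightarrow> Lp_unit_nonneg s g \<Longrightarrow> riesz_pairing l f g \<le> ennreal C0"
    using riesz_pairing_le_normalized[OF \<tau> s l rel] by blast
  \<comment> \<open>the constant is enlarged to be positive, so that it cannot annihilate an infinite norm\<close>
  have unit': "riesz_pairing l f g \<le> ennreal (C0 + 1)" if "Lp_unit_nonneg \<tau> f" "Lp_unit_nonneg s g" for f g :: "'a \<Rightarrow> real"
    using unit[OF that] by (rule order_trans) (simp add: ennreal_leI)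
  have "riesz_pairing l f g
      \<le> ennreal (C0 + 1) * epow (\<integral>\<^sup>+x. ennreal (f x powr \<tau>) \<partial>lborel) (1/\<tau>) * epow (\<integral>\<^sup>+x. ennreal (g x powr s) \<partial>lborel) (1/s)"
    if [measurable]: "f \<in> borel_measurable lborel" "g \<in> borel_measurable lborel"
      and nnf: "\<And>x. 0 \<le> f x" and nng: "\<And>x. 0 \<le> g x" for f g :: "'a \<Rightarrow> real"
  proof -
    define A where "A = (\<integral>\<^sup>+x. ennreal (f x powr \<tau>) \<partial>lborel)"
    define B where "B = (\<integral>\<^sup>+x. ennreal (g x powr s) \<partial>lborel)"
    consider "A = 0 \<or> B = 0" | "A \<noteq> 0" "B \<noteq> 0" "A = top \<or> B = top"
      | A' B' where "A = ennreal A'" "0 < A'" "B = ennreal B'" "0 < B'"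
      by (cases A; cases B) (auto simp: le_less)
    then show ?thesis
    proof cases
      case 1
      then have "riesz_pairing l f g = 0"
        using AE_eq_0_of_nn_integral_powr_eq_0[of f] AE_eq_0_of_nn_integral_powr_eq_0[of g] nnf nng
        by (intro riesz_pairing_eq_0) (auto simp: A_def B_def)
      then show ?thesis by simp
    next
      case 2
      then show ?thesis
        using C0 by (auto simp: A_def[symmetric] B_def[symmetric] epow_eq_top_iff epow_eq_0_iff ennreal_mult_eq_top_iff)
    next
      case 3
      have "riesz_pairing l f g \<le> ennreal (A' powr (1/\<tau>) * B' powr (1/s)) * ennreal (C0 + 1)"
        by (rule riesz_pairing_le_by_scaling[OF unit']) (use 3 \<tau> s that in \<open>auto simp: A_def B_def\<close>)
      then show ?thesis
        using 3 C0 by (simp add: A_def[symmetric] B_def[symmetric] epow_ennreal ennreal_mult[symmetric] mult_ac)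
    qed
  qed
  then show thesis
    using C0 by (intro that[of "C0 + 1"]) auto
qed

definition truncation :: "nat \<Rightarrow> ('a::euclidean_space \<Rightarrow> ennreal) \<Rightarrow> 'a \<Rightarrow> real" where
  "truncation N P x = indicator (ball 0 (real N)) x * enn2real (min (P x) (of_nat N))"

lemma truncation_nonneg: "0 \<le> truncation N P x"
  by (simp add: truncation_def)

lemma truncation_le_of_nat: "truncation N P x \<le> real N"
proof -
  have "enn2real (min (P x) (of_nat N)) \<le> enn2real (of_nat N)"
    by (intro enn2real_mono) (auto simp: of_nat_less_top)
  then show ?thesis by (auto simp: truncation_def indicator_def)
qed

lemma truncation_le: "ennreal (truncation N P x) \<le> P x"
proof -
  have "ennreal (truncation N P x) \<le> ennreal (enn2real (min (P x) (of_nat N)))"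
    by (auto simp: truncation_def indicator_def)
  also have "\<dots> = min (P x) (of_nat N)"
    by (intro ennreal_enn2real) (auto simp: min_def of_nat_less_top intro: le_less_trans[OF _ of_nat_less_top])
  finally show ?thesis by simp
qed

lemma truncation_mono: "N \<le> M \<Longrightarrow> truncation N P x \<le> truncation M P x"
  unfolding truncation_def
  by (intro mult_mono enn2real_mono min.mono)
     (auto simp: indicator_def min_def of_nat_less_top intro: le_less_trans[OF _ of_nat_less_top])

lemma measurable_truncation[measurable]:
  assumes [measurable]: "P \<in> borel_measurable lborel"
  shows "truncation N P \<in> borel_measurable lborel"
proof -
  have "(\<lambda>x. min (P x) (of_nat N)) = (\<lambda>x. if P x \<le> of_nat N then P x else of_nat N)"
    by (auto simp: min_def fun_eq_iff)
  moreover have "(\<lambda>x. if P x \<le> of_nat N then P x else of_nat N) \<in> borel_measurable lborel"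
    by measurable
  moreover have "(indicator (ball 0 (real N)) :: 'a \<Rightarrow> real) \<in> borel_measurable lborel"
    by (intro borel_measurable_indicator) auto
  ultimately show ?thesis
    unfolding truncation_def[abs_def] by measurable
qed

lemma nn_integral_truncation_powr_finite:
  fixes P :: "'a::euclidean_space \<Rightarrow> ennreal"
  assumes "0 < p"
  shows "(\<integral>\<^sup>+x. ennreal (truncation N P x powr p) \<partial>lborel) < top"
proof -
  have bound: "ennreal (truncation N P x powr p) \<le> ennreal (real N powr p) * indicator (ball 0 (real N)) x" for x
    using assms truncation_le_of_nat[of N P x] truncation_nonneg[of N P x]
    by (auto simp: indicator_def truncation_def intro!: powr_mono2)
  have "(\<integral>\<^sup>+x. ennreal (truncation N P x powr p) \<partial>lborel)
      \<le> (\<integral>\<^sup>+x. ennreal (real N powr p) * indicator (ball 0 (real N)) (x::'a) \<partial>lborel)"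
    by (intro nn_integral_mono bound)
  also have "\<dots> = ennreal (real N powr p) * emeasure lborel (ball (0::'a) (real N))"
    by (subst nn_integral_cmult) (auto intro!: borel_measurable_indicator)
  also have "\<dots> < top"
    using emeasure_lborel_ball_finite[of "0::'a" "real N"] by (simp add: ennreal_mult_less_top)
  finally show ?thesis .
qed

lemma SUP_truncation_powr:
  fixes P :: "'a::euclidean_space \<Rightarrow> ennreal"
  assumes p: "1 \<le> p"
  shows "(SUP N. ennreal (truncation N P x powr p)) = epow (P x) p"
proof (rule antisym)
  have "ennreal (truncation N P x powr p) = epow (ennreal (truncation N P x)) p" for N
    by (simp add: epow_ennreal truncation_nonneg)
  also have "\<dots> N \<le> epow (P x) p" for N
    using p by (intro epow_mono truncation_le) auto
  finally show "(SUP N. ennreal (truncation N P x powr p)) \<le> epow (P x) p"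
    by (intro SUP_least)
next
  obtain n0 :: nat where n0: "norm x < real n0"
    using reals_Archimedean2 by blast
  have eventually_eq: "truncation N P x = enn2real (min (P x) (of_nat N))" if "n0 \<le> N" for N
    using that n0 by (auto simp: truncation_def indicator_def)
  show "epow (P x) p \<le> (SUP N. ennreal (truncation N P x powr p))"
  proof (cases "P x")
    case (real v)
    obtain n1 :: nat where "v < real n1"
      using reals_Archimedean2 by blast
    then have "truncation (max n0 n1) P x = v"
      using eventually_eq[of "max n0 n1"] real by (auto simp: min_def ennreal_of_nat_eq_real_of_nat)
    then show ?thesis
      using real by (auto simp: epow_ennreal intro!: SUP_upper2[of "max n0 n1"])
  next
    case top
    have "of_nat n \<le> (SUP N. ennreal (truncation N P x powr p))" for n
    proof -
      define N where "N = max n (max n0 1)"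
      have "truncation N P x = real N"
        using eventually_eq[of N] top by (simp add: N_def)
      moreover have "real n \<le> real N" "1 \<le> real N"
        by (simp_all add: N_def)
      then have "real n \<le> real N powr p"
        using powr_mono[OF p, of "real N"] by simp
      ultimately show ?thesis
        by (intro SUP_upper2[of N]) (auto simp: ennreal_of_nat_eq_real_of_nat)
    qed
    then have "(SUP n. of_nat n :: ennreal) \<le> (SUP N. ennreal (truncation N P x powr p))"
      by (intro SUP_least)
    then show ?thesis
      using top by (simp add: ennreal_SUP_of_nat_eq_top)
  qed
qed

lemma nn_integral_epow_SUP_truncation:
  fixes P :: "'a::euclidean_space \<Rightarrow> ennreal"
  assumes p: "1 \<le> p" and [measurable]: "P \<in> borel_measurable lborel"
  shows "(\<integral>\<^sup>+x. epow (P x) p \<partial>lborel) = (SUP N. \<integral>\<^sup>+x. ennreal (truncation N P x powr p) \<partial>lborel)"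
proof -
  have "incseq (\<lambda>N x. ennreal (truncation N P x powr p))"
    using p by (auto simp: incseq_def le_fun_def intro!: powr_mono2 truncation_mono truncation_nonneg)
  then show ?thesis
    by (simp add: SUP_truncation_powr[OF p, symmetric] nn_integral_monotone_convergence_SUP)
qed

lemma le_epow_of_le_mult_epow:
  fixes S K :: ennreal and p :: real
  assumes p: "1 < p" and S: "S < top" and le: "S \<le> K * epow S (1 - 1/p)"
  shows "S \<le> epow K p"
proof -
  obtain S' where S': "S = ennreal S'" "0 \<le> S'"
    using S by (cases S) auto
  show ?thesis
  proof (cases "S' = 0 \<or> K = top")
    case False
    then obtain K' where K': "K = ennreal K'" "0 \<le> K'" and "0 < S'"
      using S' by (cases K) auto
    then have "S' \<le> K' * S' powr (1 - 1/p)"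
      using le S' by (simp add: epow_ennreal ennreal_mult[symmetric] del: ennreal_mult')
    then have "S' / S' powr (1 - 1/p) \<le> K'"
      using \<open>0 < S'\<close> by (simp add: divide_le_eq)
    moreover have "S' / S' powr (1 - 1/p) = S' powr (1/p)"
      using \<open>0 < S'\<close> powr_diff[of S' 1 "1 - 1/p"] by simp
    ultimately have "S' powr (1/p) \<le> K'"
      by simp
    then have "(S' powr (1/p)) powr p \<le> K' powr p"
      using p \<open>0 < S'\<close> by (intro powr_mono2) auto
    then show ?thesis
      using p \<open>0 < S'\<close> S' K' by (simp add: epow_ennreal powr_powr)
  qed (auto simp: S')
qed

lemma Lp_norm_le_by_duality:
  fixes h f :: "'a::euclidean_space \<Rightarrow> real" and A :: ennreal
  assumes [measurable]: "h \<in> borel_measurable lborel" "f \<in> borel_measurable lborel"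
    and nnh: "\<And>x. 0 \<le> h x" and nnf: "\<And>x. 0 \<le> f x" and p: "1 < p"
    and finite: "(\<integral>\<^sup>+x. ennreal (h x powr p) \<partial>lborel) < top"
    and h_le: "\<And>x. ennreal (h x) \<le> (\<integral>\<^sup>+y. ennreal (f y * norm (x - y) powr (-l)) \<partial>lborel)"
    and pairing: "riesz_pairing l (\<lambda>x. h x powr (p - 1)) f
       \<le> K * epow (\<integral>\<^sup>+x. ennreal (h x powr p) \<partial>lborel) (1 - 1/p)"
  shows "(\<integral>\<^sup>+x. ennreal (h x powr p) \<partial>lborel) \<le> epow K p"
proof (rule le_epow_of_le_mult_epow[OF p finite])
  have "h x powr p = h x powr (p - 1) * h x" for x
    using nnh[of x] p by (cases "h x = 0") (simp_all add: powr_diff)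
  then have "(\<integral>\<^sup>+x. ennreal (h x powr p) \<partial>lborel) = (\<integral>\<^sup>+x. ennreal (h x powr (p - 1)) * ennreal (h x) \<partial>lborel)"
    using nnh by (simp add: ennreal_mult)
  also have "\<dots> \<le> (\<integral>\<^sup>+x. ennreal (h x powr (p - 1)) * (\<integral>\<^sup>+y. ennreal (f y * norm (x - y) powr (-l)) \<partial>lborel) \<partial>lborel)"
    by (intro nn_integral_mono mult_left_mono h_le) auto
  also have "\<dots> = riesz_pairing l (\<lambda>x. h x powr (p - 1)) f"
    unfolding riesz_pairing_def
    using nnf by (simp add: nn_integral_cmult[symmetric] ennreal_mult[symmetric] mult.assoc del: ennreal_mult')
  finally show "(\<integral>\<^sup>+x. ennreal (h x powr p) \<partial>lborel) \<le> K * epow (\<integral>\<^sup>+x. ennreal (h x powr p) \<partial>lborel) (1 - 1/p)"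
    using pairing by simp
qed

theorem Hardy_Littlewood_Sobolev:
  fixes l \<tau> p :: real
  assumes \<tau>: "1 < \<tau>" and p: "\<tau> < p" and l: "0 < l" "l < DIM('a::euclidean_space)"
    and rel: "1/\<tau> - 1/p = 1 - l / DIM('a)"
  obtains C where "0 < C"
    "\<And>f :: 'a \<Rightarrow> real. f \<in> borel_measurable lborel \<Longrightarrow> (\<And>x. 0 \<le> f x) \<Longrightarrow>
      (\<integral>\<^sup>+x. epow (\<integral>\<^sup>+y. ennreal (f y * norm (x - y) powr (-l)) \<partial>lborel) p \<partial>lborel)
        \<le> ennreal C * epow (\<integral>\<^sup>+x. ennreal (f x powr \<tau>) \<partial>lborel) (p/\<tau>)"
proof -
  have p1: "1 < p" using \<tau> p by simp
  define s where "s = p / (p - 1)"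
  have s: "1 < s" "1/s = 1 - 1/p" "(p - 1) * s = p"
    using p1 by (auto simp: s_def field_simps)
  then have rel': "1/s + 1/\<tau> = 2 - l / DIM('a)"
    using rel by simp
  obtain C where C: "0 < C" and pairing: "\<And>g f :: 'a \<Rightarrow> real.
      g \<in> borel_measurable lborel \<Longrightarrow> f \<in> borel_measurable lborel \<Longrightarrow> (\<And>x. 0 \<le> g x) \<Longrightarrow> (\<And>x. 0 \<le> f x) \<Longrightarrow>
      riesz_pairing l g f
        \<le> ennreal C * epow (\<integral>\<^sup>+x. ennreal (g x powr s) \<partial>lborel) (1/s) * epow (\<integral>\<^sup>+x. ennreal (f x powr \<tau>) \<partial>lborel) (1/\<tau>)"
    using riesz_pairing_le[OF s(1) \<tau> l rel'] by blast
  have "(\<integral>\<^sup>+x. epow (\<integral>\<^sup>+y. ennreal (f y * norm (x - y) powr (-l)) \<partial>lborel) p \<partial>lborel)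
      \<le> ennreal (C powr p) * epow (\<integral>\<^sup>+x. ennreal (f x powr \<tau>) \<partial>lborel) (p/\<tau>)"
    if [measurable]: "f \<in> borel_measurable lborel" and nnf: "\<And>x. 0 \<le> f x" for f :: "'a \<Rightarrow> real"
  proof -
    define A where "A = epow (\<integral>\<^sup>+x. ennreal (f x powr \<tau>) \<partial>lborel) (1/\<tau>)"
    define P where "P x = (\<integral>\<^sup>+y. ennreal (f y * norm (x - y) powr (-l)) \<partial>lborel)" for x
    have [measurable]: "P \<in> borel_measurable lborel"
      unfolding P_def[abs_def] by measurable
    have "(\<integral>\<^sup>+x. ennreal (truncation N P x powr p) \<partial>lborel) \<le> epow (ennreal C * A) p" for N
    proof (rule Lp_norm_le_by_duality[OF _ _ truncation_nonneg nnf p1])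
      have "(truncation N P x powr (p - 1)) powr s = truncation N P x powr p" for x
        using s by (simp add: powr_powr)
      then show "riesz_pairing l (\<lambda>x. truncation N P x powr (p - 1)) f
          \<le> ennreal C * A * epow (\<integral>\<^sup>+x. ennreal (truncation N P x powr p) \<partial>lborel) (1 - 1/p)"
        using pairing[of "\<lambda>x. truncation N P x powr (p - 1)" f] nnf s
        by (simp add: A_def mult_ac)
    qed (use p1 in \<open>auto simp: nn_integral_truncation_powr_finite truncation_le P_def[symmetric]\<close>)
    then have "(\<integral>\<^sup>+x. epow (P x) p \<partial>lborel) \<le> epow (ennreal C * A) p"
      using p1 by (simp add: nn_integral_epow_SUP_truncation SUP_least)
    also have "\<dots> = ennreal (C powr p) * epow (\<integral>\<^sup>+x. ennreal (f x powr \<tau>) \<partial>lborel) (p/\<tau>)"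
      using C by (simp add: A_def epow_mult epow_epow epow_ennreal)
    finally show ?thesis
      by (simp add: P_def)
  qed
  then show thesis
    using C by (intro that[of "C powr p"]) auto
qed

definition line_kernel_const :: "real \<Rightarrow> real" where
  "line_kernel_const e = enn2real (\<integral>\<^sup>+v. ennreal (sqrt (1 + v\<^sup>2) powr (-e)) \<partial>lborel)"

lemma nn_integral_line_kernel_finite:
  assumes e: "1 < e"
  shows "(\<integral>\<^sup>+v. ennreal (sqrt (1 + v\<^sup>2) powr (-e)) \<partial>lborel) < top"
proof -
  define k where "k u = indicator {0..1} u + ennreal (u powr (-e)) * indicator {1..} u" for u :: real
  have [measurable]: "k \<in> borel_measurable borel"
    unfolding k_def[abs_def] by measurable
  have "ennreal (sqrt (1 + v\<^sup>2) powr (-e)) \<le> k \<bar>v\<bar>" for v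
  proof (cases "\<bar>v\<bar> < 1")
    case True
    have "sqrt (1 + v\<^sup>2) powr (-e) \<le> 1"
      using e by (simp add: powr_minus_divide divide_le_eq_1 ge_one_powr_ge_zero)
    then show ?thesis
      using True by (simp add: k_def indicator_def)
  next
    case False
    then have "sqrt (1 + v\<^sup>2) powr (-e) \<le> \<bar>v\<bar> powr (-e)"
      using e by (intro powr_mono2') (auto simp: real_le_rsqrt)
    then have "ennreal (sqrt (1 + v\<^sup>2) powr (-e)) \<le> ennreal (\<bar>v\<bar> powr (-e)) * indicator {1..} \<bar>v\<bar>"
      using False by (simp add: indicator_def)
    then show ?thesis
      unfolding k_def by (rule order.trans) (simp add: add_increasing)
  qed
  also have "k \<bar>v\<bar> \<le> k v + k (-v)" for v
    by (cases "0 \<le> v") auto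
  finally have "(\<integral>\<^sup>+v. ennreal (sqrt (1 + v\<^sup>2) powr (-e)) \<partial>lborel) \<le> (\<integral>\<^sup>+v. k v + k (-v) \<partial>lborel)"
    by (intro nn_integral_mono)
  also have "\<dots> = 2 * (\<integral>\<^sup>+v. k v \<partial>lborel)"
    using nn_integral_real_affine[of k "-1" 0] by (simp add: nn_integral_add mult_2)
  also have "(\<integral>\<^sup>+v. k v \<partial>lborel) = 1 + ennreal (1 / (e - 1))"
    using nn_integral_powr_atLeast[of "-e" 1] e by (simp add: k_def nn_integral_add)
  also have "2 * (1 + ennreal (1 / (e - 1))) < top"
    by (simp add: less_top[symmetric] ennreal_mult_eq_top_iff)
  finally show ?thesis .
qed

lemma line_kernel_const_pos:
  assumes e: "1 < e"
  shows "0 < line_kernel_const e"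
proof -
  have bound: "ennreal (sqrt 2 powr (-e)) * indicator {0..1} v \<le> ennreal (sqrt (1 + v\<^sup>2) powr (-e))" for v :: real
    using e by (auto simp: indicator_def power_le_one add_pos_nonneg intro!: ennreal_leI powr_mono2')
  have "ennreal (sqrt 2 powr (-e)) = (\<integral>\<^sup>+v. ennreal (sqrt 2 powr (-e)) * indicator {0..1::real} v \<partial>lborel)"
    by (simp add: nn_integral_cmult)
  also have "\<dots> \<le> (\<integral>\<^sup>+v. ennreal (sqrt (1 + v\<^sup>2) powr (-e)) \<partial>lborel)"
    by (intro nn_integral_mono bound)
  finally have "0 < (\<integral>\<^sup>+v. ennreal (sqrt (1 + v\<^sup>2) powr (-e)) \<partial>lborel)"
    by (simp add: less_le_trans[rotated])
  then show ?thesis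
    using nn_integral_line_kernel_finite[OF e] by (simp add: line_kernel_const_def enn2real_positive_iff)
qed

lemma nn_integral_line_kernel:
  assumes e: "1 < e" and \<rho>: "0 < \<rho>"
  shows "(\<integral>\<^sup>+u. ennreal (sqrt (\<rho>\<^sup>2 + (c - u)\<^sup>2) powr (-e)) \<partial>lborel) = ennreal (line_kernel_const e * \<rho> powr (1 - e))"
proof -
  have "sqrt (\<rho>\<^sup>2 + (c - (c + \<rho> * v))\<^sup>2) powr (-e) = \<rho> powr (-e) * sqrt (1 + v\<^sup>2) powr (-e)" for v
  proof -
    have "\<rho>\<^sup>2 + (c - (c + \<rho> * v))\<^sup>2 = \<rho>\<^sup>2 * (1 + v\<^sup>2)"
      by (simp add: power2_eq_square algebra_simps)
    then show ?thesis
      using \<rho> by (simp add: real_sqrt_mult powr_mult)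
  qed
  then have "(\<integral>\<^sup>+u. ennreal (sqrt (\<rho>\<^sup>2 + (c - u)\<^sup>2) powr (-e)) \<partial>lborel)
      = ennreal \<rho> * (\<integral>\<^sup>+v. ennreal (\<rho> powr (-e)) * ennreal (sqrt (1 + v\<^sup>2) powr (-e)) \<partial>lborel)"
    using nn_integral_real_affine[of "\<lambda>u. ennreal (sqrt (\<rho>\<^sup>2 + (c - u)\<^sup>2) powr (-e))" \<rho> c] \<rho>
    by (simp add: ennreal_mult)
  also have "\<dots> = ennreal (\<rho> * \<rho> powr (-e) * line_kernel_const e)"
    using \<rho> nn_integral_line_kernel_finite[OF e]
    by (simp add: nn_integral_cmult line_kernel_const_def ennreal_enn2real_if ennreal_mult mult.assoc)
  also have "\<rho> * \<rho> powr (-e) = \<rho> powr (1 - e)"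
    using \<rho> by (simp add: powr_diff powr_minus_divide)
  finally show ?thesis
    by (simp add: mult.commute)
qed

lemma nn_integral_lborel_pair:
  fixes f :: "'a::euclidean_space \<times> 'b::euclidean_space \<Rightarrow> ennreal"
  assumes "f \<in> borel_measurable (lborel \<Otimes>\<^sub>M lborel)"
  shows "(\<integral>\<^sup>+z. f z \<partial>lborel) = (\<integral>\<^sup>+x. \<integral>\<^sup>+s. f (x, s) \<partial>lborel \<partial>lborel)"
  using lborel.nn_integral_fst[OF assms] by (simp add: lborel_prod)

lemma AE_lborel_fst:
  fixes P :: "'a::euclidean_space \<Rightarrow> bool"
  assumes "AE x in lborel. P x"
  shows "AE z in (lborel :: ('a \<times> 'b::euclidean_space) measure). P (fst z)"
proof -
  from assms obtain N where "{x \<in> space lborel. \<not> P x} \<subseteq> N" "emeasure lborel N = 0" "N \<in> sets lborel"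
    by (rule AE_E)
  then have N: "{x. \<not> P x} \<subseteq> N" "N \<in> null_sets lborel"
    by auto
  then have "N \<times> UNIV \<in> null_sets (lborel \<Otimes>\<^sub>M (lborel :: 'b measure))"
    by (intro lborel.times_in_null_sets1) auto
  then show ?thesis
    unfolding lborel_prod[symmetric] by (rule AE_I') (use N in auto)
qed

lemma nn_integral_fibrewise:
  fixes G :: "'a::euclidean_space \<times> real \<Rightarrow> ennreal" and w g :: "'a \<Rightarrow> ennreal"
  assumes [measurable]: "G \<in> borel_measurable (lborel \<Otimes>\<^sub>M lborel)" "w \<in> borel_measurable lborel"
    and fibre: "AE z' in lborel. (\<integral>\<^sup>+s. G (z', s) \<partial>lborel) = g z'"
  shows "(\<integral>\<^sup>+z. G z * w (fst z) \<partial>lborel) = (\<integral>\<^sup>+z'. g z' * w z' \<partial>lborel)"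
proof -
  have "(\<integral>\<^sup>+z. G z * w (fst z) \<partial>lborel) = (\<integral>\<^sup>+z'. (\<integral>\<^sup>+s. G (z', s) \<partial>lborel) * w z' \<partial>lborel)"
    by (subst nn_integral_lborel_pair) (simp_all add: nn_integral_multc)
  also have "\<dots> = (\<integral>\<^sup>+z'. g z' * w z' \<partial>lborel)"
    using fibre by (intro nn_integral_cong_AE) (auto elim!: eventually_mono)
  finally show ?thesis .
qed

lemma Young_factorization:
  fixes F \<kappa> \<phi> k \<eta> q r :: real
  assumes pos: "0 < F" "0 < \<kappa>" "0 < \<phi>" "0 < k" and \<eta>: "0 < \<eta>" and q: "0 < q"
    and r: "r * (1 + 1/q - 1/\<eta>) = 1"
  shows "(F powr \<eta> * \<kappa> powr r * \<phi> powr (1 - \<eta>) * k powr (1 - r)) powr (1/q)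
       * (F powr \<eta> * \<phi> powr (1 - \<eta>) * k) powr (1/\<eta> - 1/q)
       * (\<kappa> powr r * \<phi> * k powr (1 - r)) powr (1 - 1/\<eta>) = F * \<kappa>"
    (is "?L = _")
proof -
  have ring: "a * (\<eta> * X + r * Y + (1 - \<eta>) * Z + (1 - r) * W) + (b - a) * (\<eta> * X + (1 - \<eta>) * Z + W)
      + (1 - b) * (r * Y + Z + (1 - r) * W)
      = \<eta> * b * X + r * (1 + a - b) * Y + (1 - \<eta> * b) * Z + (1 - r * (1 + a - b)) * W" for a b X Y Z W
    by (simp add: algebra_simps)
  have "ln ?L = (1/q) * (\<eta> * ln F + r * ln \<kappa> + (1 - \<eta>) * ln \<phi> + (1 - r) * ln k)
      + (1/\<eta> - 1/q) * (\<eta> * ln F + (1 - \<eta>) * ln \<phi> + ln k)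
      + (1 - 1/\<eta>) * (r * ln \<kappa> + ln \<phi> + (1 - r) * ln k)"
    using pos by (simp add: ln_mult ln_powr)
  also have "\<dots> = ln (F * \<kappa>)"
    unfolding ring using pos \<eta> r by (simp add: ln_mult)
  finally have "ln ?L = ln (F * \<kappa>)" .
  moreover have "0 < ?L"
    using pos by simp
  ultimately show ?thesis
    using pos by simp
qed

lemma nn_integral_epow_le_of_interpolation:
  fixes A X :: "real \<Rightarrow> ennreal" and I :: ennreal
  assumes q: "1 \<le> q" and [measurable]: "X \<in> borel_measurable lborel"
    and A: "\<And>t. A t \<le> epow (X t) (1/q) * epow I (1 - 1/q)"
    and X: "(\<integral>\<^sup>+t. X t \<partial>lborel) \<le> I"
  shows "(\<integral>\<^sup>+t. epow (A t) q \<partial>lborel) \<le> epow I q"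
proof -
  have "epow (A t) q \<le> epow (epow (X t) (1/q) * epow I (1 - 1/q)) q" for t
    using q by (intro epow_mono A) auto
  also have "\<dots> t = X t * epow I (q - 1)" for t
    using q by (simp add: epow_mult epow_epow algebra_simps)
  finally have "(\<integral>\<^sup>+t. epow (A t) q \<partial>lborel) \<le> (\<integral>\<^sup>+t. X t \<partial>lborel) * epow I (q - 1)"
    by (subst nn_integral_multc[symmetric]) (auto intro: nn_integral_mono)
  also have "\<dots> \<le> I * epow I (q - 1)"
    by (intro mult_right_mono X) auto
  also have "\<dots> = epow I q"
    using epow_add[of I 1 "q - 1"] by simp
  finally show ?thesis .
qed

context
  fixes F :: "'a::euclidean_space \<times> real \<Rightarrow> real" and \<phi> k :: "'a \<Rightarrow> real"
    and \<kappa> :: "real \<Rightarrow> 'a \<times> real \<Rightarrow> real" and \<eta> q r :: real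
  assumes F_measurable[measurable]: "F \<in> borel_measurable (lborel \<Otimes>\<^sub>M lborel)"
    and \<phi>_measurable[measurable]: "\<phi> \<in> borel_measurable lborel"
    and k_measurable[measurable]: "k \<in> borel_measurable lborel"
    and \<kappa>_measurable[measurable]: "(\<lambda>(t, z). \<kappa> t z) \<in> borel_measurable (lborel \<Otimes>\<^sub>M (lborel \<Otimes>\<^sub>M lborel))"
    and nonneg: "\<And>z. 0 \<le> F z" "\<And>z'. 0 \<le> \<phi> z'" "\<And>z'. 0 \<le> k z'" "\<And>t z. 0 \<le> \<kappa> t z"
    and fibre_F: "\<And>z'. (\<integral>\<^sup>+s. ennreal (F (z', s) powr \<eta>) \<partial>lborel) = ennreal (\<phi> z' powr \<eta>)"
    and support: "\<And>z' s. 0 < F (z', s) \<Longrightarrow> 0 < \<phi> z'"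
    and k_pos: "AE z' in lborel. 0 < k z'"
    and fibre_s: "\<And>t. AE z' in lborel. (\<integral>\<^sup>+s. ennreal (\<kappa> t (z', s) powr r) \<partial>lborel) = ennreal (k z' powr r)"
    and fibre_t: "AE z' in lborel. \<forall>s. (\<integral>\<^sup>+t. ennreal (\<kappa> t (z', s) powr r) \<partial>lborel) = ennreal (k z' powr r)"
    and \<eta>: "1 \<le> \<eta>" "\<eta> \<le> q" and r: "0 < r" "r * (1 + 1/q - 1/\<eta>) = 1"
begin

text \<open>The three factors of the Hoelder step in the classical proof of Young's convolution inequality.\<close>

private definition "young_X t z = F z powr \<eta> * \<kappa> t z powr r * \<phi> (fst z) powr (1 - \<eta>) * k (fst z) powr (1 - r)"
private definition "young_Y z = F z powr \<eta> * \<phi> (fst z) powr (1 - \<eta>) * k (fst z)"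
private definition "young_Z t z = \<kappa> t z powr r * \<phi> (fst z) * k (fst z) powr (1 - r)"

private lemma measurable_young:
  "young_X t \<in> borel_measurable lborel" "young_Y \<in> borel_measurable lborel" "young_Z t \<in> borel_measurable lborel"
  "(\<lambda>z. F z * \<kappa> t z) \<in> borel_measurable lborel" "(\<lambda>t. \<kappa> t z) \<in> borel_measurable lborel"
  "(\<lambda>(t, z). young_X t z) \<in> borel_measurable (lborel \<Otimes>\<^sub>M lborel)"
proof -
  show "young_X t \<in> borel_measurable lborel" "young_Y \<in> borel_measurable lborel" "young_Z t \<in> borel_measurable lborel"
    "(\<lambda>z. F z * \<kappa> t z) \<in> borel_measurable lborel"
    unfolding young_X_def young_Y_def young_Z_def lborel_prod[symmetric] by measurable
  show "(\<lambda>t. \<kappa> t z) \<in> borel_measurable lborel"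
    using measurable_Pair1[OF \<kappa>_measurable, of z] by (simp add: space_pair_measure)
  have "(\<lambda>(t, z). young_X t z) \<in> borel_measurable (lborel \<Otimes>\<^sub>M (lborel \<Otimes>\<^sub>M lborel))"
    unfolding young_X_def by measurable
  then show "(\<lambda>(t, z). young_X t z) \<in> borel_measurable (lborel \<Otimes>\<^sub>M lborel)"
    by (simp add: lborel_prod)
qed

context
  notes measurable_young[measurable]
begin

private lemma k_powr_split: "k z' powr r * k z' powr (1 - r) = k z'"
  using nonneg(3)[of z'] by (auto simp: powr_add[symmetric])

private lemma young_integral_Y: "(\<integral>\<^sup>+z. ennreal (young_Y z) \<partial>lborel) = (\<integral>\<^sup>+z'. ennreal (\<phi> z' * k z') \<partial>lborel)"
proof -
  have "\<phi> z' powr \<eta> * \<phi> z' powr (1 - \<eta>) = \<phi> z'" for z'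
    using nonneg(2)[of z'] by (auto simp: powr_add[symmetric])
  then show ?thesis
    using nn_integral_fibrewise[of "\<lambda>z. ennreal (F z powr \<eta>)" "\<lambda>z'. ennreal (\<phi> z' powr (1 - \<eta>) * k z')"
        "\<lambda>z'. ennreal (\<phi> z' powr \<eta>)"] nonneg fibre_F
    by (simp add: young_Y_def ennreal_mult[symmetric] mult.assoc[symmetric] del: ennreal_mult')
qed

private lemma young_integral_Z: "(\<integral>\<^sup>+z. ennreal (young_Z t z) \<partial>lborel) = (\<integral>\<^sup>+z'. ennreal (\<phi> z' * k z') \<partial>lborel)"
  using nn_integral_fibrewise[of "\<lambda>z. ennreal (\<kappa> t z powr r)" "\<lambda>z'. ennreal (\<phi> z' * k z' powr (1 - r))"
      "\<lambda>z'. ennreal (k z' powr r)"] fibre_s[of t] nonneg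
  by (simp add: young_Z_def ennreal_mult[symmetric] mult_ac k_powr_split del: ennreal_mult')

private lemma young_integral_X:
  "(\<integral>\<^sup>+t. \<integral>\<^sup>+z. ennreal (young_X t z) \<partial>lborel \<partial>lborel) = (\<integral>\<^sup>+z'. ennreal (\<phi> z' * k z') \<partial>lborel)"
proof -
  have "AE z in lborel. (\<integral>\<^sup>+t. ennreal (young_X t z) \<partial>lborel) = ennreal (young_Y z)"
    using AE_lborel_fst[OF fibre_t]
  proof eventually_elim
    case (elim z)
    have "(\<integral>\<^sup>+t. ennreal (young_X t z) \<partial>lborel)
        = (\<integral>\<^sup>+t. ennreal (\<kappa> t z powr r) * ennreal (F z powr \<eta> * \<phi> (fst z) powr (1 - \<eta>) * k (fst z) powr (1 - r)) \<partial>lborel)"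
      using nonneg by (simp add: young_X_def ennreal_mult[symmetric] mult_ac del: ennreal_mult')
    also have "\<dots> = (\<integral>\<^sup>+t. ennreal (\<kappa> t z powr r) \<partial>lborel) * ennreal (F z powr \<eta> * \<phi> (fst z) powr (1 - \<eta>) * k (fst z) powr (1 - r))"
      by (rule nn_integral_multc) measurable
    also have "\<dots> = ennreal (young_Y z)"
      using elim[THEN spec, of "snd z"] nonneg
      by (simp add: young_Y_def ennreal_mult[symmetric] k_powr_split mult_ac del: ennreal_mult')
    finally show ?case .
  qed
  then have "(\<integral>\<^sup>+z. \<integral>\<^sup>+t. ennreal (young_X t z) \<partial>lborel \<partial>lborel) = (\<integral>\<^sup>+z'. ennreal (\<phi> z' * k z') \<partial>lborel)"
    using young_integral_Y by (simp add: nn_integral_cong_AE)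
  then show ?thesis
    by (subst lborel_nn_integral_swap) measurable
qed

private lemma young_factorization_AE:
  "AE z in lborel. F z * \<kappa> t z = young_X t z powr (1/q) * young_Y z powr (1/\<eta> - 1/q) * young_Z t z powr (1 - 1/\<eta>)"
  using AE_lborel_fst[OF k_pos]
proof eventually_elim
  case (elim z)
  show ?case
  proof (cases "0 < F z \<and> 0 < \<kappa> t z")
    case True
    then show ?thesis
      using Young_factorization[of "F z" "\<kappa> t z" "\<phi> (fst z)" "k (fst z)" \<eta> q r] elim support[of "fst z" "snd z"] \<eta> r
      by (simp add: young_X_def young_Y_def young_Z_def)
  next
    case False
    then have "F z = 0 \<or> \<kappa> t z = 0"
      using nonneg(1)[of z] nonneg(4)[of t z] by auto
    then show ?thesis
      using \<eta> by (auto simp: young_X_def young_Z_def)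
  qed
qed

private lemma young_Holder:
  "(\<integral>\<^sup>+z. ennreal (F z * \<kappa> t z) \<partial>lborel)
     \<le> epow (\<integral>\<^sup>+z. ennreal (young_X t z) \<partial>lborel) (1/q) * epow (\<integral>\<^sup>+z'. ennreal (\<phi> z' * k z') \<partial>lborel) (1 - 1/q)"
proof -
  have "(\<integral>\<^sup>+z. ennreal (F z * \<kappa> t z) \<partial>lborel)
      = (\<integral>\<^sup>+z. ennreal (young_X t z powr (1/q) * young_Y z powr (1/\<eta> - 1/q) * young_Z t z powr (1 - 1/\<eta>)) \<partial>lborel)"
    using young_factorization_AE[of t] by (intro nn_integral_cong_AE) (auto elim!: eventually_mono)
  also have "\<dots> \<le> epow (\<integral>\<^sup>+z. ennreal (young_X t z) \<partial>lborel) (1/q) * epow (\<integral>\<^sup>+z. ennreal (young_Y z) \<partial>lborel) (1/\<eta> - 1/q)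
      * epow (\<integral>\<^sup>+z. ennreal (young_Z t z) \<partial>lborel) (1 - 1/\<eta>)"
  proof (rule nn_integral_Holder3)
    show "\<And>z. 0 \<le> young_X t z" "\<And>z. 0 \<le> young_Y z" "\<And>z. 0 \<le> young_Z t z"
      using nonneg by (auto simp: young_X_def young_Y_def young_Z_def)
    show "0 \<le> 1/q" "0 \<le> 1/\<eta> - 1/q" "0 \<le> 1 - 1/\<eta>" "1/q + (1/\<eta> - 1/q) + (1 - 1/\<eta>) = 1"
      using \<eta> by (auto simp: frac_le)
  qed measurable
  finally show ?thesis
    by (simp add: young_integral_Y young_integral_Z mult.assoc epow_add)
qed

lemma fibred_Young_inequality:
  "(\<integral>\<^sup>+t. epow (\<integral>\<^sup>+z. ennreal (F z * \<kappa> t z) \<partial>lborel) q \<partial>lborel)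
     \<le> epow (\<integral>\<^sup>+z'. ennreal (\<phi> z' * k z') \<partial>lborel) q"
proof (rule nn_integral_epow_le_of_interpolation[OF _ _ young_Holder])
  show "1 \<le> q"
    using \<eta> by simp
  show "(\<lambda>t. \<integral>\<^sup>+z. ennreal (young_X t z) \<partial>lborel) \<in> borel_measurable lborel"
    by measurable
  show "(\<integral>\<^sup>+t. \<integral>\<^sup>+z. ennreal (young_X t z) \<partial>lborel \<partial>lborel) \<le> (\<integral>\<^sup>+z'. ennreal (\<phi> z' * k z') \<partial>lborel)"
    by (simp add: young_integral_X)
qed

end

end

lemma dist_eq_sqrt_fst_snd:
  fixes y z :: "'a::real_normed_vector \<times> real"
  shows "dist y z = sqrt ((norm (fst y - fst z))\<^sup>2 + (snd y - snd z)\<^sup>2)"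
  by (cases y; cases z) (simp only: dist_Pair_Pair fst_conv snd_conv, simp add: dist_norm dist_real_def power2_abs)

lemma dist_Pair_eq_sqrt:
  fixes x :: "'a::real_normed_vector" and t :: real
  shows "dist (x, t) z = sqrt ((norm (x - fst z))\<^sup>2 + (t - snd z)\<^sup>2)"
  by (simp add: dist_eq_sqrt_fst_snd)

lemma measurable_dist_Pair_powr[measurable]:
  fixes x :: "'a::euclidean_space"
  shows "(\<lambda>(t::real, z::'a \<times> real). dist (x, t) z powr (-m)) \<in> borel_measurable (lborel \<Otimes>\<^sub>M (lborel \<Otimes>\<^sub>M lborel))"
  unfolding dist_Pair_eq_sqrt by measurable

lemma nn_integral_dist_Pair_powr:
  fixes x z :: "'a::euclidean_space" and t :: real
  assumes "x \<noteq> z" "1 < m * r"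
  shows "(\<integral>\<^sup>+s. ennreal ((dist (x, t) (z, s) powr (-m)) powr r) \<partial>lborel)
       = ennreal (line_kernel_const (m * r) * norm (x - z) powr (1 - m * r))"
  using nn_integral_line_kernel[of "m * r" "norm (x - z)" t] assms by (simp add: dist_Pair_eq_sqrt powr_powr)

lemma half_space_kernel_fibre_bound:
  fixes F :: "'a::euclidean_space \<times> real \<Rightarrow> real" and \<phi> :: "'a \<Rightarrow> real" and x :: 'a
  assumes [measurable]: "F \<in> borel_measurable (lborel \<Otimes>\<^sub>M lborel)" "\<phi> \<in> borel_measurable lborel"
    and nonneg: "\<And>z. 0 \<le> F z" "\<And>z'. 0 \<le> \<phi> z'"
    and fibre_F: "\<And>z'. (\<integral>\<^sup>+s. ennreal (F (z', s) powr \<eta>) \<partial>lborel) = ennreal (\<phi> z' powr \<eta>)"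
    and support: "\<And>z' s. 0 < F (z', s) \<Longrightarrow> 0 < \<phi> z'"
    and \<eta>: "1 \<le> \<eta>" "\<eta> \<le> q" and r: "0 < r" "r * (1 + 1/q - 1/\<eta>) = 1" and mr: "1 < m * r"
  defines "c \<equiv> line_kernel_const (m * r) powr (1/r)" and "l \<equiv> (m * r - 1) / r"
  shows "(\<integral>\<^sup>+t. epow (\<integral>\<^sup>+z. ennreal (F z * dist (x, t) z powr (-m)) \<partial>lborel) q \<partial>lborel)
     \<le> epow (ennreal c * (\<integral>\<^sup>+z'. ennreal (\<phi> z' * norm (x - z') powr (-l)) \<partial>lborel)) q"
proof -
  define k where "k z' = c * norm (x - z') powr (-l)" for z'
  have c: "0 < c"
    using line_kernel_const_pos[OF mr] by (simp add: c_def)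
  have "(-l) * r = 1 - m * r"
    using r(1) by (simp add: l_def)
  then have k_powr: "k z' powr r = line_kernel_const (m * r) * norm (x - z') powr (1 - m * r)" for z'
    using r(1) line_kernel_const_pos[OF mr] by (simp add: k_def c_def powr_mult powr_powr)
  have fibre: "(\<integral>\<^sup>+s. ennreal ((dist (x, t) (z', s) powr (-m)) powr r) \<partial>lborel) = ennreal (k z' powr r)"
    "(\<integral>\<^sup>+t. ennreal ((dist (x, t) (z', s) powr (-m)) powr r) \<partial>lborel) = ennreal (k z' powr r)"
    if "z' \<noteq> x" for z' and t s :: real
    using nn_integral_dist_Pair_powr[of x z' m r t] nn_integral_dist_Pair_powr[of z' x m r s] that mr
    by (simp_all add: k_powr dist_commute norm_minus_commute)
  have "(\<integral>\<^sup>+t. epow (\<integral>\<^sup>+z. ennreal (F z * dist (x, t) z powr (-m)) \<partial>lborel) q \<partial>lborel)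
      \<le> epow (\<integral>\<^sup>+z'. ennreal (\<phi> z' * k z') \<partial>lborel) q"
  proof (rule fibred_Young_inequality[OF _ _ _ _ nonneg _ _ fibre_F support _ _ _ \<eta> r])
    show "AE z' in lborel. 0 < k z'"
      using AE_lborel_singleton[of x] by eventually_elim (simp add: k_def c)
    show "AE z' in lborel. (\<integral>\<^sup>+s. ennreal ((dist (x, t) (z', s) powr (-m)) powr r) \<partial>lborel) = ennreal (k z' powr r)"
      for t :: real
      using AE_lborel_singleton[of x] by eventually_elim (rule fibre(1))
    show "AE z' in lborel. \<forall>s::real. (\<integral>\<^sup>+t. ennreal ((dist (x, t) (z', s) powr (-m)) powr r) \<partial>lborel) = ennreal (k z' powr r)"
      using AE_lborel_singleton[of x] by eventually_elim (blast intro: fibre(2))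
    show "k \<in> borel_measurable lborel"
      unfolding k_def by measurable
    show "0 \<le> k z'" for z'
      using c by (simp add: k_def)
  qed (simp_all add: measurable_dist_Pair_powr)
  also have "(\<integral>\<^sup>+z'. ennreal (\<phi> z' * k z') \<partial>lborel) = ennreal c * (\<integral>\<^sup>+z'. ennreal (\<phi> z' * norm (x - z') powr (-l)) \<partial>lborel)"
    using nonneg c by (simp add: k_def nn_integral_cmult[symmetric] ennreal_mult[symmetric] mult_ac del: ennreal_mult')
  finally show ?thesis .
qed

definition fibre_integral :: "real \<Rightarrow> ('a \<times> real \<Rightarrow> real) \<Rightarrow> 'a \<Rightarrow> ennreal" where
  "fibre_integral q F x = (\<integral>\<^sup>+t. indicator {0<..} t * ennreal (\<bar>F (x, t)\<bar> powr q) \<partial>lborel)"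

lemma mixnorm_eq_fibre_integral:
  "mixnorm p q F = epow (\<integral>\<^sup>+x. epow (fibre_integral q F x) (p/q) \<partial>lborel) (1/p)"
  by (simp add: mixnorm_def fibre_integral_def)

lemma measurable_fibre_integral[measurable]:
  fixes F :: "'a::euclidean_space \<times> real \<Rightarrow> real"
  assumes [measurable]: "F \<in> borel_measurable (lborel \<Otimes>\<^sub>M lborel)"
  shows "fibre_integral q F \<in> borel_measurable lborel"
  unfolding fibre_integral_def by measurable

lemma fibre_regularization:
  fixes F :: "'a::euclidean_space \<times> real \<Rightarrow> real"
  assumes [measurable]: "F \<in> borel_measurable (lborel \<Otimes>\<^sub>M lborel)" and \<eta>: "0 < \<eta>"
    and finite: "AE x in lborel. fibre_integral \<eta> F x \<noteq> \<infinity>"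
  obtains F1 \<phi> where "F1 \<in> borel_measurable (lborel \<Otimes>\<^sub>M lborel)" "\<phi> \<in> borel_measurable lborel"
    "\<And>z. 0 \<le> F1 z" "\<And>x. 0 \<le> \<phi> x"
    "\<And>x. (\<integral>\<^sup>+s. ennreal (F1 (x, s) powr \<eta>) \<partial>lborel) = ennreal (\<phi> x powr \<eta>)"
    "\<And>x s. 0 < F1 (x, s) \<Longrightarrow> 0 < \<phi> x"
    "\<And>x. ennreal (\<phi> x powr \<eta>) \<le> fibre_integral \<eta> F x"
    "AE z in lborel. F1 z = indicator {0<..} (snd z) * \<bar>F z\<bar>"
proof -
  \<comment> \<open>discard the null set of fibres whose norm is infinite, and the fibres of norm zero\<close>
  define good where "good x \<longleftrightarrow> 0 < fibre_integral \<eta> F x \<and> fibre_integral \<eta> F x < \<infinity>" for x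
  define F1 where "F1 z = (if good (fst z) \<and> 0 < snd z then \<bar>F z\<bar> else 0)" for z
  define \<phi> where "\<phi> x = (if good x then enn2real (fibre_integral \<eta> F x) powr (1/\<eta>) else 0)" for x
  have [measurable]: "Measurable.pred lborel good"
    unfolding good_def by measurable
  have F1_measurable[measurable]: "F1 \<in> borel_measurable (lborel \<Otimes>\<^sub>M lborel)"
    unfolding F1_def by measurable
  have \<phi>_powr: "\<phi> x powr \<eta> = enn2real (fibre_integral \<eta> F x)" if "good x" for x
    using that \<eta> by (simp add: \<phi>_def powr_powr)
  have fibre: "(\<integral>\<^sup>+s. ennreal (F1 (x, s) powr \<eta>) \<partial>lborel) = ennreal (\<phi> x powr \<eta>)" for x
  proof (cases "good x")
    case True
    then have "(\<integral>\<^sup>+s. ennreal (F1 (x, s) powr \<eta>) \<partial>lborel) = fibre_integral \<eta> F x"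
      unfolding fibre_integral_def by (intro nn_integral_cong) (simp add: F1_def indicator_def)
    then show ?thesis
      using True by (simp add: \<phi>_powr good_def less_top)
  qed (simp add: F1_def \<phi>_def)
  have "ennreal (\<phi> x powr \<eta>) \<le> fibre_integral \<eta> F x" for x
  proof (cases "good x")
    case True
    then show ?thesis
      by (simp add: \<phi>_powr) (simp add: good_def ennreal_enn2real_if)
  qed (simp add: \<phi>_def)
  moreover have "0 < \<phi> x" if "0 < F1 (x, s)" for x s
    using that by (auto simp: F1_def \<phi>_def good_def enn2real_eq_0_iff split: if_splits)
  moreover have "AE z in lborel. F1 z = indicator {0<..} (snd z) * \<bar>F z\<bar>"
  proof -
    have fibrewise: "AE x in lborel. AE s in lborel. F1 (x, s) = indicator {0<..} s * \<bar>F (x, s)\<bar>"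
      using finite
    proof eventually_elim
      case (elim x)
      show ?case
      proof (cases "fibre_integral \<eta> F x = 0")
        case True
        then have "AE s in lborel. indicator {0<..} s * ennreal (\<bar>F (x, s)\<bar> powr \<eta>) = 0"
          unfolding fibre_integral_def by (subst (asm) nn_integral_0_iff_AE) auto
        then show ?thesis
          by eventually_elim (use True in \<open>auto simp: F1_def good_def indicator_def\<close>)
      qed (use elim in \<open>auto simp: F1_def good_def indicator_def zero_less_iff_neq_zero less_top\<close>)
    qed
    have "AE z in lborel \<Otimes>\<^sub>M lborel. F1 z = indicator {0<..} (snd z) * \<bar>F z\<bar>"
      by (rule lborel_pair.AE_pair_measure) (measurable, use fibrewise in simp)
    then show ?thesis
      by (metis lborel_prod)
  qed
  ultimately show thesis
    using F1_measurable fibre by (intro that) (auto simp: F1_def \<phi>_def)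
qed

lemma mixnorm_le_of_fibre_bound:
  assumes p: "0 < p" and q: "0 < q" and bound: "\<And>x. fibre_integral q H x \<le> epow (Q x) q"
  shows "mixnorm p q H \<le> epow (\<integral>\<^sup>+x. epow (Q x) p \<partial>lborel) (1/p)"
proof -
  have "epow (fibre_integral q H x) (p/q) \<le> epow (epow (Q x) q) (p/q)" for x
    using p q by (intro epow_mono bound) auto
  also have "epow (epow (Q x) q) (p/q) = epow (Q x) p" for x
    using q by (simp add: epow_epow)
  finally show ?thesis
    unfolding mixnorm_eq_fibre_integral using p by (intro epow_mono nn_integral_mono) auto
qed

lemma AE_finite_of_fibre_bound:
  fixes G :: "'a::euclidean_space \<times> real \<Rightarrow> ennreal"
  assumes [measurable]: "G \<in> borel_measurable (lborel \<Otimes>\<^sub>M lborel)" "Q \<in> borel_measurable lborel"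
    and bound: "\<And>x. (\<integral>\<^sup>+t. epow (G (x, t)) q \<partial>lborel) \<le> epow (Q x) q"
    and finite: "(\<integral>\<^sup>+x. epow (Q x) p \<partial>lborel) < \<infinity>"
  shows "AE y in lborel. G y \<noteq> \<infinity>"
proof -
  have "AE x in lborel. epow (Q x) p \<noteq> \<infinity>"
    using finite by (intro nn_integral_PInf_AE) auto
  then have "AE x in lborel. AE t in lborel. G (x, t) \<noteq> \<infinity>"
  proof eventually_elim
    case (elim x)
    then have "(\<integral>\<^sup>+t. epow (G (x, t)) q \<partial>lborel) \<noteq> \<infinity>"
      using bound[of x] by (auto simp: epow_eq_top_iff top_unique)
    then have "AE t in lborel. epow (G (x, t)) q \<noteq> \<infinity>"
      by (intro nn_integral_PInf_AE) measurable
    then show ?case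
      by (simp add: epow_eq_top_iff)
  qed
  then have "AE y in lborel \<Otimes>\<^sub>M lborel. G y \<noteq> \<infinity>"
    by (rule lborel_pair.AE_pair_measure[rotated]) measurable
  then show ?thesis
    by (metis lborel_prod)
qed

definition G_majorant :: "real \<Rightarrow> ((real^'m::finite) \<times> real \<Rightarrow> real) \<Rightarrow> (real^'m) \<times> real \<Rightarrow> ennreal" where
  "G_majorant \<beta> F y = (\<integral>\<^sup>+z. ennreal (norm (indicator (upper_half TYPE('m)) z *\<^sub>R
      (F z / dist y z powr (real (CARD('m) + 1) - \<beta>)))) \<partial>lborel)"

lemma norm_G_op_integrand:
  fixes F :: "(real^'m::finite) \<times> real \<Rightarrow> real"
  shows "norm (indicator (upper_half TYPE('m)) z *\<^sub>R (F z / dist y z powr (real (CARD('m) + 1) - \<beta>)))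
     = indicator {0<..} (snd z) * \<bar>F z\<bar> * dist y z powr (-(real (CARD('m) + 1) - \<beta>))"
proof -
  have "norm (indicator (upper_half TYPE('m)) z *\<^sub>R (F z / dist y z powr (real (CARD('m) + 1) - \<beta>)))
      = indicator {0<..} (snd z) * (\<bar>F z\<bar> * inverse (dist y z powr (real (CARD('m) + 1) - \<beta>)))"
    by (simp only: norm_scaleR real_norm_def divide_inverse abs_mult abs_inverse)
       (simp add: upper_half_def indicator_def abs_mult)
  moreover have "inverse (dist y z powr (real (CARD('m) + 1) - \<beta>)) = dist y z powr (-(real (CARD('m) + 1) - \<beta>))"
    by (rule powr_minus[symmetric])
  ultimately show ?thesis
    by (simp only: mult.assoc)
qed

lemma abs_G_op_le_G_majorant:
  fixes F :: "(real^'m::finite) \<times> real \<Rightarrow> real"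
  shows "ennreal \<bar>G_op \<beta> F y\<bar> \<le> G_majorant \<beta> F y"
proof -
  let ?f = "\<lambda>z. indicator (upper_half TYPE('m)) z *\<^sub>R (F z / dist y z powr (real (CARD('m) + 1) - \<beta>))"
  have "ennreal \<bar>G_op \<beta> F y\<bar> = ennreal (norm (integral\<^sup>L lborel ?f))"
    by (simp add: G_op_def set_lebesgue_integral_def)
  also have "\<dots> \<le> (\<integral>\<^sup>+z. ennreal (norm (?f z)) \<partial>lborel)"
  proof (cases "integrable lborel ?f")
    case True
    then show ?thesis by (rule integral_norm_bound_ennreal)
  qed (simp add: not_integrable_integral_eq)
  finally show ?thesis
    by (simp only: G_majorant_def)
qed

lemma G_op_integrand_eq:
  fixes F :: "(real^'m::finite) \<times> real \<Rightarrow> real"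
  shows "(\<lambda>z. indicator (upper_half TYPE('m)) z *\<^sub>R (F z / dist y z powr (real (CARD('m) + 1) - \<beta>)))
     = (\<lambda>z. indicator {0<..} (snd z) * (F z / sqrt ((norm (fst y - fst z))\<^sup>2 + (snd y - snd z)\<^sup>2)
          powr (real (CARD('m) + 1) - \<beta>)))"
  by (simp add: fun_eq_iff upper_half_def indicator_def dist_eq_sqrt_fst_snd)

lemma set_integrable_of_G_majorant:
  fixes F :: "(real^'m::finite) \<times> real \<Rightarrow> real"
  assumes "F \<in> borel_measurable lborel" and "G_majorant \<beta> F y < \<infinity>"
  shows "set_integrable lborel (upper_half TYPE('m)) (\<lambda>z. F z / dist y z powr (real (CARD('m) + 1) - \<beta>))"
proof -
  have [measurable]: "F \<in> borel_measurable (lborel \<Otimes>\<^sub>M lborel)"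
    using assms(1) by (simp add: lborel_prod)
  have "(\<lambda>z. indicator {0<..} (snd z) * (F z / sqrt ((norm (fst y - fst z))\<^sup>2 + (snd y - snd z)\<^sup>2)
      powr (real (CARD('m) + 1) - \<beta>))) \<in> borel_measurable (lborel \<Otimes>\<^sub>M lborel)"
    by measurable
  then have "(\<lambda>z. indicator (upper_half TYPE('m)) z *\<^sub>R (F z / dist y z powr (real (CARD('m) + 1) - \<beta>)))
      \<in> borel_measurable lborel"
    unfolding G_op_integrand_eq lborel_prod .
  moreover have "(\<integral>\<^sup>+z. ennreal (norm (indicator (upper_half TYPE('m)) z *\<^sub>R
      (F z / dist y z powr (real (CARD('m) + 1) - \<beta>)))) \<partial>lborel) < \<infinity>"
    using assms(2) by (simp only: G_majorant_def)
  ultimately show ?thesis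
    unfolding set_integrable_def by (rule integrableI_bounded)
qed

lemma measurable_G_majorant:
  fixes F :: "(real^'m::finite) \<times> real \<Rightarrow> real"
  assumes "F \<in> borel_measurable lborel"
  shows "G_majorant \<beta> F \<in> borel_measurable (lborel \<Otimes>\<^sub>M lborel)"
proof -
  have [measurable]: "F \<in> borel_measurable (lborel \<Otimes>\<^sub>M lborel)"
    using assms by (simp add: lborel_prod)
  have eq: "G_majorant \<beta> F y = (\<integral>\<^sup>+z. ennreal (indicator {0<..} (snd z) * \<bar>F z\<bar>
      * sqrt ((norm (fst y - fst z))\<^sup>2 + (snd y - snd z)\<^sup>2) powr (-(real (CARD('m) + 1) - \<beta>))) \<partial>(lborel \<Otimes>\<^sub>M lborel))"
    for y
    unfolding G_majorant_def norm_G_op_integrand unfolding lborel_prod dist_eq_sqrt_fst_snd ..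
  have "(\<lambda>y. \<integral>\<^sup>+z. ennreal (indicator {0<..} (snd z) * \<bar>F z\<bar>
      * sqrt ((norm (fst y - fst z))\<^sup>2 + (snd y - snd z)\<^sup>2) powr (-(real (CARD('m) + 1) - \<beta>))) \<partial>(lborel \<Otimes>\<^sub>M lborel))
    \<in> borel_measurable (lborel \<Otimes>\<^sub>M lborel)"
    by measurable
  then show ?thesis
    by (simp only: eq[symmetric])
qed

lemma G_majorant_eq_of_AE:
  fixes F F1 :: "(real^'m::finite) \<times> real \<Rightarrow> real"
  assumes "AE z in lborel. F1 z = indicator {0<..} (snd z) * \<bar>F z\<bar>"
  shows "G_majorant \<beta> F y = (\<integral>\<^sup>+z. ennreal (F1 z * dist y z powr (-(real (CARD('m) + 1) - \<beta>))) \<partial>lborel)"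
  unfolding G_majorant_def norm_G_op_integrand
  using assms by (intro nn_integral_cong_AE) (auto elim!: eventually_mono)

lemma G_majorant_Lp_bound:
  fixes F :: "(real^'m::finite) \<times> real \<Rightarrow> real" and \<beta> \<tau> \<eta> q p r C :: real
  defines "m \<equiv> real (CARD('m) + 1) - \<beta>"
  defines "l \<equiv> (m * r - 1) / r" and "c \<equiv> line_kernel_const (m * r) powr (1/r)"
  assumes [measurable]: "F \<in> borel_measurable lborel" and finite: "mixnorm \<tau> \<eta> F < \<infinity>"
    and \<eta>: "1 \<le> \<eta>" "\<eta> \<le> q" and p: "0 < p" and \<tau>: "0 < \<tau>"
    and r: "0 < r" "r * (1 + 1/q - 1/\<eta>) = 1" and mr: "1 < m * r" and C: "0 \<le> C"
    and HLS: "\<And>f :: real^'m \<Rightarrow> real. f \<in> borel_measurable lborel \<Longrightarrow> (\<And>x. 0 \<le> f x) \<Longrightarrow>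
      (\<integral>\<^sup>+x. epow (\<integral>\<^sup>+y. ennreal (f y * norm (x - y) powr (-l)) \<partial>lborel) p \<partial>lborel)
        \<le> ennreal C * epow (\<integral>\<^sup>+x. ennreal (f x powr \<tau>) \<partial>lborel) (p/\<tau>)"
  obtains Q where "Q \<in> borel_measurable lborel"
    "\<And>x. (\<integral>\<^sup>+t. epow (G_majorant \<beta> F (x, t)) q \<partial>lborel) \<le> epow (Q x) q"
    "(\<integral>\<^sup>+x. epow (Q x) p \<partial>lborel) \<le> epow (ennreal (c * C powr (1/p)) * mixnorm \<tau> \<eta> F) p"
proof -
  have [measurable]: "F \<in> borel_measurable (lborel \<Otimes>\<^sub>M lborel)"
    by (simp add: lborel_prod)
  have c: "0 < c"
    using line_kernel_const_pos[OF mr] by (simp add: c_def)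
  define M where "M = (\<integral>\<^sup>+x. epow (fibre_integral \<eta> F x) (\<tau>/\<eta>) \<partial>lborel)"
  have mix: "mixnorm \<tau> \<eta> F = epow M (1/\<tau>)"
    by (simp add: mixnorm_eq_fibre_integral M_def)
  then have "M < \<infinity>"
    using finite by (simp add: less_top[symmetric] epow_eq_top_iff)
  then have "AE x in lborel. epow (fibre_integral \<eta> F x) (\<tau>/\<eta>) \<noteq> \<infinity>"
    by (intro nn_integral_PInf_AE) (auto simp: M_def)
  then obtain F1 \<phi> where [measurable]: "F1 \<in> borel_measurable (lborel \<Otimes>\<^sub>M lborel)" "\<phi> \<in> borel_measurable lborel"
    and nonneg: "\<And>z. 0 \<le> F1 z" "\<And>x. 0 \<le> \<phi> x"
    and fibre: "\<And>x. (\<integral>\<^sup>+s. ennreal (F1 (x, s) powr \<eta>) \<partial>lborel) = ennreal (\<phi> x powr \<eta>)"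
    and support: "\<And>x s. 0 < F1 (x, s) \<Longrightarrow> 0 < \<phi> x"
    and \<phi>_le: "\<And>x. ennreal (\<phi> x powr \<eta>) \<le> fibre_integral \<eta> F x"
    and F1_eq: "AE z in lborel. F1 z = indicator {0<..} (snd z) * \<bar>F z\<bar>"
    using fibre_regularization[of F \<eta>] \<eta> by (auto simp: epow_eq_top_iff)
  define P where "P x = (\<integral>\<^sup>+z'. ennreal (\<phi> z' * norm (x - z') powr (-l)) \<partial>lborel)" for x
  have "ennreal (\<phi> x powr \<tau>) = epow (ennreal (\<phi> x powr \<eta>)) (\<tau>/\<eta>)" for x
    using \<eta> nonneg by (simp add: epow_ennreal powr_powr)
  also have "\<dots> x \<le> epow (fibre_integral \<eta> F x) (\<tau>/\<eta>)" for x
    using \<eta> \<tau> by (intro epow_mono \<phi>_le) auto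
  finally have \<phi>_\<tau>: "(\<integral>\<^sup>+x. ennreal (\<phi> x powr \<tau>) \<partial>lborel) \<le> M"
    unfolding M_def by (intro nn_integral_mono)
  have "(\<integral>\<^sup>+x. epow (ennreal c * P x) p \<partial>lborel) = ennreal (c powr p) * (\<integral>\<^sup>+x. epow (P x) p \<partial>lborel)"
    using c by (simp add: epow_mult epow_ennreal nn_integral_cmult P_def)
  also have "\<dots> \<le> ennreal (c powr p) * (ennreal C * epow (\<integral>\<^sup>+x. ennreal (\<phi> x powr \<tau>) \<partial>lborel) (p/\<tau>))"
    using HLS[of \<phi>] nonneg by (intro mult_left_mono) (auto simp: P_def)
  also have "\<dots> \<le> ennreal (c powr p) * (ennreal C * epow M (p/\<tau>))"
    using \<phi>_\<tau> p \<tau> by (intro mult_left_mono epow_mono) auto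
  also have "\<dots> = epow (ennreal (c * C powr (1/p)) * mixnorm \<tau> \<eta> F) p"
    using c C p by (simp add: mix epow_mult epow_epow epow_ennreal powr_mult powr_powr ennreal_mult mult.assoc)
  finally show thesis
  proof (rule that[rotated 2])
    show "(\<lambda>x. ennreal c * P x) \<in> borel_measurable lborel"
      unfolding P_def by measurable
    show "(\<integral>\<^sup>+t. epow (G_majorant \<beta> F (x, t)) q \<partial>lborel) \<le> epow (ennreal c * P x) q" for x
      unfolding G_majorant_eq_of_AE[OF F1_eq] P_def c_def l_def m_def[symmetric]
      by (rule half_space_kernel_fibre_bound[OF _ _ nonneg fibre support \<eta> r mr]) measurable
  qed
qed

lemma G_op_bound:
  fixes \<beta> \<tau> \<eta> q p r C :: real
  defines "m \<equiv> real (CARD('m) + 1) - \<beta>"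
  defines "l \<equiv> (m * r - 1) / r" and "c \<equiv> line_kernel_const (m * r) powr (1/r)"
  assumes \<eta>: "1 \<le> \<eta>" "\<eta> \<le> q" and p: "0 < p" and \<tau>: "0 < \<tau>"
    and r: "0 < r" "r * (1 + 1/q - 1/\<eta>) = 1" and mr: "1 < m * r" and C: "0 \<le> C"
    and HLS: "\<And>f :: real^'m \<Rightarrow> real. f \<in> borel_measurable lborel \<Longrightarrow> (\<And>x. 0 \<le> f x) \<Longrightarrow>
      (\<integral>\<^sup>+x. epow (\<integral>\<^sup>+y. ennreal (f y * norm (x - y) powr (-l)) \<partial>lborel) p \<partial>lborel)
        \<le> ennreal C * epow (\<integral>\<^sup>+x. ennreal (f x powr \<tau>) \<partial>lborel) (p/\<tau>)"
  shows "\<forall>F :: (real^'m) \<times> real \<Rightarrow> real. F \<in> borel_measurable lborel \<and> mixnorm \<tau> \<eta> F < \<infinity> \<longrightarrow>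
           (AE y in lborel. y \<in> upper_half TYPE('m) \<longrightarrow>
              set_integrable lborel (upper_half TYPE('m)) (\<lambda>z. F z / dist y z powr (real (CARD('m) + 1) - \<beta>)))
           \<and> mixnorm p q (G_op \<beta> F) \<le> ennreal (c * C powr (1/p)) * mixnorm \<tau> \<eta> F"
proof (intro allI impI, elim conjE)
  fix F :: "(real^'m) \<times> real \<Rightarrow> real"
  assume F[measurable]: "F \<in> borel_measurable lborel" and finite: "mixnorm \<tau> \<eta> F < \<infinity>"
  obtain Q where [measurable]: "Q \<in> borel_measurable lborel"
    and fibre_bound: "\<And>x. (\<integral>\<^sup>+t. epow (G_majorant \<beta> F (x, t)) q \<partial>lborel) \<le> epow (Q x) q"
    and Lp: "(\<integral>\<^sup>+x. epow (Q x) p \<partial>lborel) \<le> epow (ennreal (c * C powr (1/p)) * mixnorm \<tau> \<eta> F) p"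
    using G_majorant_Lp_bound[OF F finite \<eta> p \<tau> r mr[unfolded m_def] C HLS[unfolded l_def m_def]]
    unfolding c_def m_def by blast
  have "fibre_integral q (G_op \<beta> F) x \<le> epow (Q x) q" for x
  proof -
    have "indicator {0<..} t * ennreal (\<bar>G_op \<beta> F (x, t)\<bar> powr q) \<le> epow (G_majorant \<beta> F (x, t)) q" for t
      using \<eta> abs_G_op_le_G_majorant[of \<beta> F "(x, t)"]
      by (auto simp: indicator_def epow_ennreal[symmetric] intro!: epow_mono)
    then have "fibre_integral q (G_op \<beta> F) x \<le> (\<integral>\<^sup>+t. epow (G_majorant \<beta> F (x, t)) q \<partial>lborel)"
      unfolding fibre_integral_def by (intro nn_integral_mono)
    also note fibre_bound[of x]
    finally show ?thesis .
  qed
  then have "mixnorm p q (G_op \<beta> F) \<le> epow (\<integral>\<^sup>+x. epow (Q x) p \<partial>lborel) (1/p)"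
    using p \<eta> by (intro mixnorm_le_of_fibre_bound) auto
  also have "\<dots> \<le> ennreal (c * C powr (1/p)) * mixnorm \<tau> \<eta> F"
    using epow_mono[OF _ Lp, of "1/p"] p by (simp add: epow_epow)
  moreover have "AE y in lborel. G_majorant \<beta> F y \<noteq> \<infinity>"
  proof (rule AE_finite_of_fibre_bound[OF measurable_G_majorant _ fibre_bound])
    have "epow (ennreal (c * C powr (1/p)) * mixnorm \<tau> \<eta> F) p < \<infinity>"
      using finite by (simp add: epow_less_top ennreal_mult_less_top)
    with Lp show "(\<integral>\<^sup>+x. epow (Q x) p \<partial>lborel) < \<infinity>"
      by (rule le_less_trans)
  qed measurable
  then have "AE y in lborel. y \<in> upper_half TYPE('m) \<longrightarrow>
      set_integrable lborel (upper_half TYPE('m)) (\<lambda>z. F z / dist y z powr (real (CARD('m) + 1) - \<beta>))"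
    by eventually_elim (intro impI set_integrable_of_G_majorant, measurable, simp add: less_top[symmetric])
  ultimately show "(AE y in lborel. y \<in> upper_half TYPE('m) \<longrightarrow>
      set_integrable lborel (upper_half TYPE('m)) (\<lambda>z. F z / dist y z powr (real (CARD('m) + 1) - \<beta>)))
    \<and> mixnorm p q (G_op \<beta> F) \<le> ennreal (c * C powr (1/p)) * mixnorm \<tau> \<eta> F"
    by simp
qed

lemma half_space_exponents:
  fixes d \<beta> \<tau> \<eta> q p :: real
  assumes d: "1 \<le> d" and \<beta>: "0 < \<beta>" and \<tau>: "1 < \<tau>" and \<eta>: "1 \<le> \<eta>" "\<eta> \<le> q" and "q \<le> p"
    and \<gamma>: "1/\<eta> < \<beta> + 1/q" and scaling: "d/p = d/\<tau> + 1/\<eta> - 1/q - \<beta>"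
  defines "r \<equiv> 1 / (1 + 1/q - 1/\<eta>)" and "m \<equiv> d + 1 - \<beta>"
  shows "0 < r" "r * (1 + 1/q - 1/\<eta>) = 1" "1 < m * r" "0 < (m * r - 1) / r" "(m * r - 1) / r < d"
    "\<tau> < p" "1/\<tau> - 1/p = 1 - ((m * r - 1) / r) / d"
proof -
  \<comment> \<open>\<open>\<gamma> = \<beta> + 1/q - 1/\<eta>\<close> is the gain in integrability; the fibre kernel has exponent \<open>l = d - \<gamma>\<close>\<close>
  have "1/\<eta> \<le> 1" "0 < 1/q"
    using \<eta> by simp_all
  then have den: "0 < 1 + 1/q - 1/\<eta>"
    by linarith
  then show r: "0 < r" "r * (1 + 1/q - 1/\<eta>) = 1"
    by (simp_all add: r_def)
  have p: "0 < p" using \<eta> \<open>q \<le> p\<close> by simp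
  have \<gamma>_eq: "\<beta> + 1/q - 1/\<eta> = d/\<tau> - d/p"
    using scaling by simp
  show "\<tau> < p"
  proof (rule ccontr)
    assume "\<not> \<tau> < p"
    then have "d/\<tau> \<le> d/p"
      using d \<tau> p by (intro divide_left_mono) auto
    then show False
      using \<gamma> \<gamma>_eq by simp
  qed
  have "d/\<tau> < d" using \<tau> d by (simp add: divide_less_eq)
  moreover have "0 < d/p" using d p by simp
  ultimately have \<gamma>_lt: "\<beta> + 1/q - 1/\<eta> < d"
    using \<gamma>_eq by simp
  have "(m * r - 1) / r = m - 1/r"
    using r(1) by (simp add: field_simps)
  then have l: "(m * r - 1) / r = d - (\<beta> + 1/q - 1/\<eta>)"
    by (simp add: m_def r_def)
  show "0 < (m * r - 1) / r" "(m * r - 1) / r < d"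
    using \<gamma> \<gamma>_lt by (simp_all add: l)
  show "1 < m * r"
    using \<open>0 < (m * r - 1) / r\<close> r by (simp add: zero_less_divide_iff)
  show "1/\<tau> - 1/p = 1 - ((m * r - 1) / r) / d"
    using \<gamma>_eq d by (simp add: l field_simps)
qed

theorem lemma2p7:
  fixes \<beta> \<tau> \<eta> q p :: real
  assumes "0 < \<beta>" "\<beta> < real (CARD('m::finite) + 1)"
    and "1 < \<tau>"
    and "1 \<le> \<eta>" "\<eta> \<le> q" "q \<le> p"
    and "1 / \<eta> < \<beta> + 1 / q"
    and "real CARD('m) / p = real CARD('m) / \<tau> + 1 / \<eta> - 1 / q - \<beta>"
  shows "\<exists>C::real. \<forall>F :: (real^'m) \<times> real \<Rightarrow> real.
           F \<in> borel_measurable lborel \<and> mixnorm \<tau> \<eta> F < \<infinity> \<longrightarrow>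
             (AE y in lborel. y \<in> upper_half TYPE('m) \<longrightarrow>
                set_integrable lborel (upper_half TYPE('m))
                  (\<lambda>z. F z / dist y z powr (real (CARD('m) + 1) - \<beta>)))
           \<and> mixnorm p q (G_op \<beta> F) \<le> ennreal C * mixnorm \<tau> \<eta> F"
proof -
  define r where "r = 1 / (1 + 1/q - 1/\<eta>)"
  have "1 \<le> real CARD('m)"
    by simp
  note exponents = half_space_exponents[OF this assms(1,3-8), folded r_def]
  obtain C where "0 < C" and HLS: "\<And>f :: real^'m \<Rightarrow> real. f \<in> borel_measurable lborel \<Longrightarrow> (\<And>x. 0 \<le> f x) \<Longrightarrow>
      (\<integral>\<^sup>+x. epow (\<integral>\<^sup>+y. ennreal (f y * norm (x - y)
          powr (-(((real (CARD('m) + 1) - \<beta>) * r - 1) / r))) \<partial>lborel) p \<partial>lborel)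
        \<le> ennreal C * epow (\<integral>\<^sup>+x. ennreal (f x powr \<tau>) \<partial>lborel) (p/\<tau>)"
    using Hardy_Littlewood_Sobolev[of \<tau> p "((real (CARD('m) + 1) - \<beta>) * r - 1) / r", where 'a="real^'m"]
      assms(3) exponents(4-7) by (auto simp: add.commute)
  show ?thesis
    by (rule exI, rule G_op_bound[OF assms(4,5) _ _ exponents(1,2) _ _ HLS])
       (use assms exponents \<open>0 < C\<close> in \<open>auto simp: add.commute\<close>)
qed

end
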